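(* Let $A\in {\operatorname{\mathsf{TPD}}}_n(\mathbb{S}_{\max}^\vee)$, set $\gamma_i=a_{ii}$ ordered so that $\gamma_1\succeq\cdots\succeq\gamma_n$, let $\gamma=\gamma_k$ and $B=B_k=\gamma_k I\ominus A$. Assume that $\gamma$ is a simple $\mathbb{S}_{\max}$-eigenvalue. Let \[ v^{(k)}:= (B_k)_{:,k}^{\mathrm{adj}}. \] Then we have the following properties: \begin{enumerate} \item $v^{(k)}$ is a weak $\mathbb{S}_{\max}$-eigenvector associated to $\gamma$, such that $v^{(k)}_k\in\mathbb{S}_{\max}^\vee\setminus\{\mathbf{0}\}$. \item There exists a $\mathbb{S}_{\max}$-eigenvector $v$ associated to $\gamma$ such that $|v|=|v^{(k)}|$ and $v_i=v^{(k)}_i$ for all $i\in [n]$ satisfying $v^{(k)}_i\in\mathbb{S}_{\max}^\vee$, in particular for $i=k$. \item Any $\mathbb{S}_{\max}$-eigenvector $v$ associated to $\gamma$ satisfies $v\,\nabla\, \lambda v^{(k)}$ for some $\lambda\in \mathbb{S}_{\max}^{\vee}\setminus\{\mathbf{0}\}$. \end{enumerate}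
   Context: $\mathbb{S}_{\max}$ is the symmetrized tropical semiring over a divisible totally ordered abelian group, with zero $\mathbf{0}$, unit $\mathbf{1}$, minus $\ominus$, modulus $|\cdot|$; $\mathbb{S}_{\max}^\vee$ is the set of signed elements; $a\,\nabla\, b$ iff $a\ominus b$ is balanced; $a\preceq b$ iff $b=a\oplus b$. $A\in{\operatorname{\mathsf{TPD}}}_n(\mathbb{S}_{\max}^\vee)$: $A$ symmetric with signed entries, $\mathbf{0}<a_{ii}$ and $a_{ij}^2<a_{ii}a_{jj}$ for $i\ne j$ (where $a<b$ iff $b\ominus a$ is positive). Its $\mathbb{S}_{\max}$-eigenvalues are its diagonal entries; $\gamma_k$ simple means it occurs once on the diagonal. $(M^{\mathrm{adj}})_{ij}=(\ominus\mathbf{1})^{i+j}\det M[\hat j,\hat i]$ (signed determinant), $M_{:,k}$ the $k$-th column. An $\mathbb{S}_{\max}$-eigenvector for $\gamma$ is $v\in(\mathbb{S}_{\max}^\vee)^n\setminus\{\mathbf{0}\}$ with $Av\,\nabla\,\gamma v$; a weak $\mathbb{S}_{\max}$-eigenvector is $v\in\mathbb{S}_{\max}^n$ with at least one coordinate in $\mathbb{S}_{\max}^\vee\setminus\{\mathbf{0}\}$ and $Av\,\nabla\,\gamma v$. *)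

theory Defs
  imports "HOL-Combinatorics.Permutations"
begin

text \<open>The value group G is written additively (the tropical product is +).
  Elements of S_max: zero, or a modulus in G together with a sign:
  positive, negative (ominus) or balanced (bullet).\<close>

datatype sgn = SPos | SNeg | SBal

fun sgn_mult :: "sgn \<Rightarrow> sgn \<Rightarrow> sgn" where
  "sgn_mult SBal _ = SBal"
| "sgn_mult _ SBal = SBal"
| "sgn_mult SPos t = t"
| "sgn_mult SNeg SPos = SNeg"
| "sgn_mult SNeg SNeg = SPos"

fun sgn_neg :: "sgn \<Rightarrow> sgn" where
  "sgn_neg SPos = SNeg"
| "sgn_neg SNeg = SPos"
| "sgn_neg SBal = SBal"

datatype 'g smax = SZero | SElt sgn 'g

instantiation smax :: (linordered_ab_group_add) comm_monoid_add
begin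
definition zero_smax :: "'a smax" where "zero_smax = SZero"
fun plus_smax :: "'a smax \<Rightarrow> 'a smax \<Rightarrow> 'a smax" where
  "plus_smax SZero b = b"
| "plus_smax (SElt s x) SZero = SElt s x"
| "plus_smax (SElt s x) (SElt t y) =
     (if y < x then SElt s x else if x < y then SElt t y
      else if s = t then SElt s x else SElt SBal x)"
instance
proof
  fix a b c :: "'a smax"
  show "a + b + c = a + (b + c)"
    by (cases a; cases b; cases c) auto
  show "a + b = b + a"
    by (cases a; cases b) auto
  show "0 + a = a" by (simp add: zero_smax_def)
qed
end

lemma sgn_mult_assoc: "sgn_mult (sgn_mult s t) u = sgn_mult s (sgn_mult t u)"
  by (cases s; cases t; cases u) auto

lemma sgn_mult_comm: "sgn_mult s t = sgn_mult t s"
  by (cases s; cases t) auto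

instantiation smax :: (linordered_ab_group_add) comm_monoid_mult
begin
definition one_smax :: "'a smax" where "one_smax = SElt SPos 0"
fun times_smax :: "'a smax \<Rightarrow> 'a smax \<Rightarrow> 'a smax" where
  "times_smax SZero b = SZero"
| "times_smax (SElt s x) SZero = SZero"
| "times_smax (SElt s x) (SElt t y) = SElt (sgn_mult s t) (x + y)"
instance
proof
  fix a b c :: "'a smax"
  show "a * b * c = a * (b * c)"
    by (cases a; cases b; cases c) (auto simp: sgn_mult_assoc add.assoc)
  show "a * b = b * a"
    by (cases a; cases b) (auto simp: sgn_mult_comm add.commute)
  show "1 * a = a"
    apply (cases a) apply (auto simp: one_smax_def)
    subgoal for s by (cases s) auto
    done
qed
end

fun sminus :: "'g smax \<Rightarrow> 'g smax" ("\<ominus>") where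
  "sminus SZero = SZero"
| "sminus (SElt s x) = SElt (sgn_neg s) x"

text \<open>The modulus |a|, seen as an element of R_max \<subseteq> S_max (positive or zero).\<close>
fun smod :: "'g smax \<Rightarrow> 'g smax" where
  "smod SZero = SZero"
| "smod (SElt s x) = SElt SPos x"

definition balanced :: "'g smax \<Rightarrow> bool" where
  "balanced a \<longleftrightarrow> a = SZero \<or> (\<exists>x. a = SElt SBal x)"

text \<open>signed elements: S_max^vee (includes zero)\<close>
definition signed :: "'g smax \<Rightarrow> bool" where
  "signed a \<longleftrightarrow> a = SZero \<or> (\<exists>x. a = SElt SPos x) \<or> (\<exists>x. a = SElt SNeg x)"

definition spositive :: "'g smax \<Rightarrow> bool" where
  "spositive a \<longleftrightarrow> (\<exists>x. a = SElt SPos x)"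

definition nabla :: "'g::linordered_ab_group_add smax \<Rightarrow> 'g smax \<Rightarrow> bool" where
  "nabla a b \<longleftrightarrow> balanced (a + \<ominus> b)"

definition spreceq :: "'g::linordered_ab_group_add smax \<Rightarrow> 'g smax \<Rightarrow> bool" where
  "spreceq a b \<longleftrightarrow> b = a + b"

definition sless :: "'g::linordered_ab_group_add smax \<Rightarrow> 'g smax \<Rightarrow> bool" where
  "sless a b \<longleftrightarrow> spositive (b + \<ominus> a)"

definition divisible_group :: "'g::linordered_ab_group_add itself \<Rightarrow> bool" where
  "divisible_group _ \<longleftrightarrow> (\<forall>(x::'g) (m::nat). 0 < m \<longrightarrow> (\<exists>y. (\<Sum>i<m. y) = x))"

section \<open>Matrices and vectors of size n (indices 0..<n)\<close>

definition sdet :: "nat \<Rightarrow> (nat \<Rightarrow> nat \<Rightarrow> 'g::linordered_ab_group_add smax) \<Rightarrow> 'g smax" where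
  "sdet n M = (\<Sum>\<sigma>\<in>{p. p permutes {0..<n}}.
       (if evenperm \<sigma> then 1 else \<ominus> 1) * (\<Prod>i<n. M i (\<sigma> i)))"

definition skip :: "nat \<Rightarrow> nat \<Rightarrow> nat" where
  "skip j r = (if r < j then r else Suc r)"

definition minor :: "(nat \<Rightarrow> nat \<Rightarrow> 'a) \<Rightarrow> nat \<Rightarrow> nat \<Rightarrow> nat \<Rightarrow> nat \<Rightarrow> 'a" where
  "minor M i j = (\<lambda>r c. M (skip i r) (skip j c))"

definition sadj :: "nat \<Rightarrow> (nat \<Rightarrow> nat \<Rightarrow> 'g::linordered_ab_group_add smax) \<Rightarrow> nat \<Rightarrow> nat \<Rightarrow> 'g smax" where
  "sadj n M i j = (\<ominus> 1) ^ (i + j) * sdet (n - 1) (minor M j i)"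

definition TPD :: "nat \<Rightarrow> (nat \<Rightarrow> nat \<Rightarrow> 'g::linordered_ab_group_add smax) \<Rightarrow> bool" where
  "TPD n A \<longleftrightarrow>
     (\<forall>i<n. \<forall>j<n. A i j = A j i \<and> signed (A i j)) \<and>
     (\<forall>i<n. sless 0 (A i i)) \<and>
     (\<forall>i<n. \<forall>j<n. i \<noteq> j \<longrightarrow> sless (A i j * A i j) (A i i * A j j))"

definition shift_mat :: "'g::linordered_ab_group_add smax \<Rightarrow> (nat \<Rightarrow> nat \<Rightarrow> 'g smax) \<Rightarrow> nat \<Rightarrow> nat \<Rightarrow> 'g smax" where
  "shift_mat \<gamma> A = (\<lambda>i j. (if i = j then \<gamma> else 0) + \<ominus> (A i j))"

definition mat_vec :: "nat \<Rightarrow> (nat \<Rightarrow> nat \<Rightarrow> 'g::linordered_ab_group_add smax) \<Rightarrow> (nat \<Rightarrow> 'g smax) \<Rightarrow> nat \<Rightarrow> 'g smax" where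
  "mat_vec n A v = (\<lambda>i. \<Sum>j<n. A i j * v j)"

definition eigvec :: "nat \<Rightarrow> (nat \<Rightarrow> nat \<Rightarrow> 'g::linordered_ab_group_add smax) \<Rightarrow> 'g smax \<Rightarrow> (nat \<Rightarrow> 'g smax) \<Rightarrow> bool" where
  "eigvec n A \<gamma> v \<longleftrightarrow> (\<forall>i<n. signed (v i)) \<and> (\<exists>i<n. v i \<noteq> 0) \<and>
     (\<forall>i<n. nabla (mat_vec n A v i) (\<gamma> * v i))"

definition weak_eigvec :: "nat \<Rightarrow> (nat \<Rightarrow> nat \<Rightarrow> 'g::linordered_ab_group_add smax) \<Rightarrow> 'g smax \<Rightarrow> (nat \<Rightarrow> 'g smax) \<Rightarrow> bool" where
  "weak_eigvec n A \<gamma> v \<longleftrightarrow> (\<exists>i<n. signed (v i) \<and> v i \<noteq> 0) \<and>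
     (\<forall>i<n. nabla (mat_vec n A v i) (\<gamma> * v i))"

end

theory Submission
  imports Defs "HOL-Combinatorics.Orbits" "HOL-Library.Option_ord"
begin

text \<open>
  Let \<open>B = \<gamma>\<^sub>k I \<ominus> A\<close>.  Only \<open>b\<^bsub>kk\<^esub>\<close> is balanced, and the \<open>2 \<times> 2\<close> dominance
  \<open>|b\<^bsub>rc\<^esub>|\<^sup>2 < |b\<^bsub>rr\<^esub> b\<^bsub>cc\<^esub>|\<close> of a TPD matrix survives the shift.  Expanding the
  adjugate column \<open>v = v\<^bsup>(k)\<^esup>\<close> over permutations, every row \<open>i \<noteq> k\<close> of \<open>B v\<close> satisfies the
  exact identity \<open>\<Oplus>\<^bsub>s \<noteq> i\<^esub> b\<^bsub>is\<^esub> v\<^sub>s = \<ominus> b\<^bsub>ii\<^esub> v\<^sub>i\<close>: up to a transposition, the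
  permutation terms fixing \<open>i\<close> are those of \<open>\<ominus> b\<^bsub>ii\<^esub> v\<^sub>i\<close>, and by the dominance every other
  term is beaten by one of them.  Row \<open>k\<close> is balanced because \<open>b\<^bsub>kk\<^esub>\<close> is, and
  \<open>v\<^sub>k = \<Prod>\<^bsub>r \<noteq> k\<^esub> b\<^bsub>rr\<^esub>\<close> is signed and nonzero.

  The potential \<open>|b\<^bsub>ii\<^esub>| |y\<^sub>i|\<^sup>2\<close> strictly increases along a dominant off-diagonal term
  of a row.  Looking at indices of maximal potential, an eigenvector has a nonzero \<open>k\<close>-th entry and
  is first bounded by, then balanced with, the multiple of \<open>v\<close> agreeing with it at \<open>k\<close>.
  Conversely, signs for the balanced entries of \<open>v\<close> are chosen in order of decreasing potential,
  each one balancing its own row without disturbing the rows treated before.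
\<close>

lemma obtain_arg_max:
  assumes "finite S" "S \<noteq> {}"
  obtains x where "x \<in> S" "\<And>y. y \<in> S \<Longrightarrow> f y \<le> (f x :: 'b::linorder)"
proof -
  have "Max (f ` S) \<in> f ` S"
    using assms by (intro Max_in) auto
  then obtain x where "x \<in> S" "f x = Max (f ` S)"
    by (metis imageE)
  then show thesis
    using that Max_ge[of "f ` S"] assms by simp
qed

lemma obtain_arg_min:
  assumes "finite S" "S \<noteq> {}"
  obtains x where "x \<in> S" "\<And>y. y \<in> S \<Longrightarrow> f x \<le> (f y :: 'b::linorder)"
proof -
  have "Min (f ` S) \<in> f ` S"
    using assms by (intro Min_in) auto
  then obtain x where "x \<in> S" "f x = Min (f ` S)"
    by (metis imageE)
  then show thesis
    using that Min_le[of "f ` S"] assms by simp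
qed

lemma finite_induct_decreasing [consumes 1, case_names empty insert]:
  fixes f :: "'a \<Rightarrow> 'b::linorder"
  assumes "finite S" and empty: "P {}"
    and step: "\<And>x S. finite S \<Longrightarrow> x \<notin> S \<Longrightarrow> (\<And>y. y \<in> S \<Longrightarrow> f x \<le> f y) \<Longrightarrow> P S \<Longrightarrow>
      P (insert x S)"
  shows "P S"
  using assms(1)
proof (induction S rule: finite_psubset_induct)
  case (psubset S)
  show ?case
  proof (cases "S = {}")
    case False
    then obtain x where x: "x \<in> S" "\<And>y. y \<in> S \<Longrightarrow> f x \<le> f y"
      using obtain_arg_min[OF psubset.hyps(1), of f] by blast
    have "P (S - {x})"
      using x by (intro psubset.IH) auto
    then have "P (insert x (S - {x}))"
      using psubset.hyps x by (intro step) auto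
    then show ?thesis
      using x by (simp add: insert_absorb)
  qed (simp add: empty)
qed

section \<open>Algebra of the symmetrized tropical semiring\<close>

instance smax :: (linordered_ab_group_add) comm_semiring_1
proof
  fix a b c :: "'a smax"
  show "(a + b) * c = a * c + b * c"
    by (cases a; cases b; cases c) (auto simp: zero_smax_def elim: sgn_mult.elims)
  show "0 * a = 0" by (simp add: zero_smax_def)
  show "a * 0 = 0" by (cases a) (simp_all add: zero_smax_def)
  show "(0::'a smax) \<noteq> 1" by (simp add: zero_smax_def one_smax_def)
qed

instance smax :: (linordered_ab_group_add) semiring_no_zero_divisors
proof
  fix a b :: "'a smax"
  show "a \<noteq> 0 \<Longrightarrow> b \<noteq> 0 \<Longrightarrow> a * b \<noteq> 0"
    by (cases a; cases b) (auto simp: zero_smax_def)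
qed

lemma smax_cases [case_names zero pos neg bal]:
  obtains "a = 0" | x where "a = SElt SPos x" | x where "a = SElt SNeg x" | x where "a = SElt SBal x"
  by (metis smax.exhaust sgn.exhaust zero_smax_def)

lemma SElt_neq_zero [simp]: "SElt s x \<noteq> 0" "0 \<noteq> SElt s x"
  by (simp_all add: zero_smax_def)

lemma add_eq_0_iff_smax [simp]: "(a::'g::linordered_ab_group_add smax) + b = 0 \<longleftrightarrow> a = 0 \<and> b = 0"
  by (cases a; cases b) (auto simp: zero_smax_def)

lemma add_idem_smax [simp]: "(a::'g::linordered_ab_group_add smax) + a = a"
  by (cases a) auto

lemma sminus_zero [simp]: "\<ominus> 0 = (0::'g::linordered_ab_group_add smax)"
  by (simp add: zero_smax_def)

lemma sminus_eq_0_iff [simp]: "\<ominus> (a::'g::linordered_ab_group_add smax) = 0 \<longleftrightarrow> a = 0"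
  by (cases a) (auto simp: zero_smax_def)

lemma sgn_neg_neg [simp]: "sgn_neg (sgn_neg s) = s"
  by (cases s) auto

lemma sgn_mult_neg_left: "sgn_mult (sgn_neg s) t = sgn_neg (sgn_mult s t)"
  by (cases s; cases t) auto

lemma sminus_sminus [simp]: "\<ominus> (\<ominus> a) = a"
  by (cases a) auto

lemma sminus_add: "\<ominus> ((a::'g::linordered_ab_group_add smax) + b) = \<ominus> a + \<ominus> b"
  by (cases a; cases b) (auto elim!: sgn_neg.elims)

lemma sminus_mult_left: "\<ominus> (a::'g::linordered_ab_group_add smax) * b = \<ominus> (a * b)"
  by (cases a; cases b) (auto simp: zero_smax_def sgn_mult_neg_left)

lemma sminus_mult_right: "(a::'g::linordered_ab_group_add smax) * \<ominus> b = \<ominus> (a * b)"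
  by (metis mult.commute sminus_mult_left)

lemma sminus_sum: "\<ominus> (sum f T) = (\<Sum>x\<in>T. \<ominus> (f x :: 'g::linordered_ab_group_add smax))"
  by (induction T rule: infinite_finite_induct) (auto simp: sminus_add)

lemma balanced_0 [simp]: "balanced 0"
  and signed_0 [simp]: "signed 0"
  and signed_1 [simp]: "signed 1"
  by (simp_all add: balanced_def signed_def zero_smax_def one_smax_def)

lemma signed_or_balanced: "signed (a::'g::linordered_ab_group_add smax) \<or> balanced a"
  by (cases a rule: smax_cases) (auto simp: signed_def balanced_def zero_smax_def)

lemma signed_balanced_eq_0: "signed a \<Longrightarrow> balanced a \<Longrightarrow> a = 0"
  by (auto simp: signed_def balanced_def zero_smax_def)

lemma balanced_sminus [simp]: "balanced (\<ominus> (a::'g::linordered_ab_group_add smax)) \<longleftrightarrow> balanced a"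
  and signed_sminus [simp]: "signed (\<ominus> a) \<longleftrightarrow> signed a"
  by (cases a rule: smax_cases; auto simp: balanced_def signed_def)+

lemma balanced_add_sminus_self: "balanced ((a::'g::linordered_ab_group_add smax) + \<ominus> a)"
  by (cases a rule: smax_cases) (auto simp: balanced_def zero_smax_def)

lemma nabla_refl [simp]: "nabla a a"
  by (simp add: nabla_def balanced_add_sminus_self)

lemma balanced_mult: "balanced a \<Longrightarrow> balanced ((a::'g::linordered_ab_group_add smax) * b)"
  by (cases b) (auto simp: balanced_def zero_smax_def)

lemma signed_mult: "signed a \<Longrightarrow> signed b \<Longrightarrow> signed ((a::'g::linordered_ab_group_add smax) * b)"
  by (cases a rule: smax_cases; cases b rule: smax_cases) (auto simp: signed_def zero_smax_def)

lemma signed_mult_factors: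
  "signed ((a::'g::linordered_ab_group_add smax) * b) \<Longrightarrow> a * b \<noteq> 0 \<Longrightarrow> signed a \<and> signed b"
  by (cases a rule: smax_cases; cases b rule: smax_cases) (auto simp: signed_def zero_smax_def)

lemma signed_prod: "(\<And>x. x \<in> T \<Longrightarrow> signed (f x)) \<Longrightarrow> signed (prod f T :: 'g::linordered_ab_group_add smax)"
  by (induction T rule: infinite_finite_induct) (simp_all add: signed_mult)

lemma prod_eq_0_iff_smax:
  "finite T \<Longrightarrow> prod f T = (0::'g::linordered_ab_group_add smax) \<longleftrightarrow> (\<exists>x\<in>T. f x = 0)"
  by (induction T rule: finite_induct) (auto simp: one_smax_def)

lemma signed_nabla_eq: "signed (a::'g::linordered_ab_group_add smax) \<Longrightarrow> signed b \<Longrightarrow> nabla a b \<Longrightarrow> a = b"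
  by (cases a rule: smax_cases; cases b rule: smax_cases)
    (auto simp: signed_def balanced_def nabla_def zero_smax_def split: if_splits)

fun sinv :: "'g::linordered_ab_group_add smax \<Rightarrow> 'g smax" where
  "sinv SZero = SZero"
| "sinv (SElt s x) = SElt s (- x)"

lemma sinv_right: "signed (a::'g::linordered_ab_group_add smax) \<Longrightarrow> a \<noteq> 0 \<Longrightarrow> a * sinv a = 1"
  by (cases a rule: smax_cases) (auto simp: signed_def one_smax_def zero_smax_def)

lemma signed_sinv: "signed (a::'g::linordered_ab_group_add smax) \<Longrightarrow> signed (sinv a)"
  by (cases a rule: smax_cases) (auto simp: signed_def zero_smax_def)

lemma sinv_eq_0_iff [simp]: "sinv a = 0 \<longleftrightarrow> a = 0"
  by (cases a) (auto simp: zero_smax_def)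

lemma signed_mult_cancel_left:
  assumes "signed c" "c \<noteq> 0" "c * a = c * b"
  shows "a = (b::'g::linordered_ab_group_add smax)"
proof -
  have "(sinv c * c) * a = (sinv c * c) * b"
    using assms(3) by (simp add: mult.assoc)
  then show ?thesis
    using sinv_right[OF assms(1,2)] by (simp add: mult.commute)
qed

text \<open>The modulus \<open>|a|\<close> read in \<open>G\<close> extended by a least element \<open>None = |\<zero>|\<close>, so that
  comparisons of moduli are the canonical linear order on \<open>'g option\<close>.\<close>

fun mag :: "'g smax \<Rightarrow> 'g option" where
  "mag SZero = None"
| "mag (SElt s x) = Some x"

lemma mag_eq_None_iff [simp]: "mag a = None \<longleftrightarrow> a = 0"
  by (cases a) (auto simp: zero_smax_def)

lemma mag_zero [simp]: "mag 0 = None"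
  by (simp add: zero_smax_def)

lemma mag_le_None_iff [simp]: "mag a \<le> None \<longleftrightarrow> a = 0"
  by (cases a) (auto simp: zero_smax_def)

lemma None_less_mag_iff [simp]: "None < mag (a::'g::linordered_ab_group_add smax) \<longleftrightarrow> a \<noteq> 0"
  by (cases a rule: smax_cases) auto

lemma mag_add [simp]: "mag ((a::'g::linordered_ab_group_add smax) + b) = max (mag a) (mag b)"
  by (cases a; cases b) (auto simp: max_def zero_smax_def)

lemma mag_sminus [simp]: "mag (\<ominus> a) = mag a"
  by (cases a) auto

lemma mag_smod [simp]: "mag (smod a) = mag a"
  by (cases a) auto

lemma signed_smod [simp]: "signed (smod a)"
  by (cases a) (auto simp: signed_def zero_smax_def)

lemma smod_eq_iff_mag_eq: "smod a = smod b \<longleftrightarrow> mag a = mag b"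
  by (cases a; cases b) auto

lemma mag_mult_cancel_left:
  "c \<noteq> 0 \<Longrightarrow> mag (c * a) = mag (c * b) \<longleftrightarrow> mag a = mag (b::'g::linordered_ab_group_add smax)"
  by (cases a; cases b; cases c) (auto simp: zero_smax_def)

lemma mag_mult_cong:
  "mag a = mag a' \<Longrightarrow> mag b = mag b' \<Longrightarrow> mag ((a::'g::linordered_ab_group_add smax) * b) = mag (a' * b')"
  by (cases a; cases a'; cases b; cases b') (auto simp: zero_smax_def)

lemma mag_mult_mono:
  "mag a \<le> mag b \<Longrightarrow> mag c \<le> mag d \<Longrightarrow>
   mag ((a::'g::linordered_ab_group_add smax) * c) \<le> mag (b * d)"
  by (cases a; cases b; cases c; cases d) (auto intro: add_mono)

lemma mag_mult_strict_mono:
  "mag a < mag b \<Longrightarrow> mag c \<le> mag d \<Longrightarrow> d \<noteq> 0 \<Longrightarrow>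
   mag ((a::'g::linordered_ab_group_add smax) * c) < mag (b * d)"
  by (cases a; cases b; cases c; cases d) (auto simp: zero_smax_def intro: add_less_le_mono)

lemma mag_mult_less_cancel_right:
  "mag ((a::'g::linordered_ab_group_add smax) * c) < mag (b * c) \<Longrightarrow> mag a < mag b"
  by (cases a; cases b; cases c) auto

lemma mag_mult_less_cancel_left:
  "mag ((c::'g::linordered_ab_group_add smax) * a) < mag (c * b) \<Longrightarrow> mag a < mag b"
  by (cases a; cases b; cases c) auto

lemma mag_square_le_imp_le:
  "mag ((a::'g::linordered_ab_group_add smax) * a) \<le> mag (b * b) \<Longrightarrow> mag a \<le> mag b"
  by (cases a; cases b) (auto simp flip: not_less intro: add_strict_mono)

lemma mag_square_less_imp_less:
  "mag ((a::'g::linordered_ab_group_add smax) * a) < mag (b * b) \<Longrightarrow> mag a < mag b"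
  by (cases a; cases b) (auto simp flip: not_le intro: add_mono)

lemma mag_sum_le_iff:
  "finite T \<Longrightarrow> mag (sum f T :: 'g::linordered_ab_group_add smax) \<le> c \<longleftrightarrow> (\<forall>x\<in>T. mag (f x) \<le> c)"
  by (induction T rule: finite_induct) auto

lemma mag_sum_less_iff:
  "finite T \<Longrightarrow> mag (sum f T :: 'g::linordered_ab_group_add smax) < c \<longleftrightarrow> None < c \<and> (\<forall>x\<in>T. mag (f x) < c)"
  by (induction T rule: finite_induct) auto

lemma mag_le_sum:
  "finite T \<Longrightarrow> x \<in> T \<Longrightarrow> mag (f x) \<le> mag (sum f T :: 'g::linordered_ab_group_add smax)"
  using mag_sum_le_iff[of T f "mag (sum f T)"] by blast

lemma mag_sum_cong:
  assumes "finite T" "\<And>x. x \<in> T \<Longrightarrow> mag (f x) = mag (g x)"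
  shows "mag (sum f T :: 'g::linordered_ab_group_add smax) = mag (sum g T)"
  using assms by (induction T rule: finite_induct) auto

lemma balanced_add_smaller:
  "balanced a \<Longrightarrow> mag b \<le> mag a \<Longrightarrow> balanced ((a::'g::linordered_ab_group_add smax) + b)"
  by (cases a; cases b) (auto simp: balanced_def zero_smax_def)

lemma balanced_add_same_mag:
  "mag a = mag b \<Longrightarrow> a \<noteq> b \<Longrightarrow> balanced ((a::'g::linordered_ab_group_add smax) + b)"
  by (cases a rule: smax_cases; cases b rule: smax_cases) (auto simp: balanced_def zero_smax_def)

lemma add_absorb: "mag b < mag a \<Longrightarrow> (a::'g::linordered_ab_group_add smax) + b = a"
  by (cases a; cases b) (auto simp: zero_smax_def)

lemma add_sum_absorb:
  assumes "finite T" "\<And>t. t \<in> T \<Longrightarrow> f t = 0 \<or> f t = c \<or> mag (f t) < mag c"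
  shows "c + sum f T = (c::'g::linordered_ab_group_add smax)"
  using assms
proof (induction T rule: finite_induct)
  case (insert t T)
  have "c + f t = c"
    using insert.prems[of t] add_absorb[of "f t" c] by auto
  then have "c + sum f (insert t T) = c + sum f T"
    using insert.hyps by (metis add.assoc sum.insert)
  then show ?case
    using insert by simp
qed simp

lemma sum_eq_dominant:
  assumes "finite T" "d \<in> T" "f d = c" "\<And>t. t \<in> T \<Longrightarrow> f t = 0 \<or> f t = c \<or> mag (f t) < mag c"
  shows "sum f T = (c::'g::linordered_ab_group_add smax)"
  using assms add_sum_absorb[of "T - {d}" f c] by (simp add: sum.remove)

text \<open>A term of modulus \<open>|x|\<close> other than \<open>x\<close> would make \<open>x = x \<oplus> sum\<close> balanced.\<close>

lemma sum_eq_signed_terms: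
  assumes T: "finite T" and sum: "sum g T = x" and x: "signed x" "x \<noteq> 0" and t: "t \<in> T"
  shows "g t = x \<or> mag (g t) < mag (x::'g::linordered_ab_group_add smax)"
proof (rule ccontr)
  assume "\<not> ?thesis"
  moreover have "mag (g t) \<le> mag x"
    using mag_le_sum[OF T t, of g] sum by simp
  ultimately have "balanced (x + g t)"
    by (intro balanced_add_same_mag) auto
  moreover have "mag (sum g (T - {t})) \<le> mag (sum g T)"
    using T by (subst mag_sum_le_iff) (auto intro: mag_le_sum)
  then have "mag (sum g (T - {t})) \<le> mag (x + g t)"
    using sum by (simp add: le_max_iff_disj)
  ultimately have "balanced (x + g t + sum g (T - {t}))"
    by (rule balanced_add_smaller)
  also have "x + g t + sum g (T - {t}) = x"
    using sum T t by (simp add: sum.remove add.assoc)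
  finally show False
    using x signed_balanced_eq_0 by blast
qed

lemma mag_prod_mono:
  "(\<And>x. x \<in> T \<Longrightarrow> mag (f x) \<le> mag (g x)) \<Longrightarrow>
   mag (prod f T :: 'g::linordered_ab_group_add smax) \<le> mag (prod g T)"
  by (induction T rule: infinite_finite_induct) (auto intro: mag_mult_mono)

lemma mag_prod_strict_mono:
  assumes "finite T" "\<And>x. x \<in> T \<Longrightarrow> mag (f x) \<le> mag (g x)" "x0 \<in> T" "mag (f x0) < mag (g x0)"
    and "\<And>x. x \<in> T \<Longrightarrow> g x \<noteq> 0"
  shows "mag (prod f T :: 'g::linordered_ab_group_add smax) < mag (prod g T)"
proof -
  have "mag (prod f (T - {x0})) \<le> mag (prod g (T - {x0}))" "prod g (T - {x0}) \<noteq> 0"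
    using assms by (auto intro: mag_prod_mono simp: prod_eq_0_iff_smax)
  then show ?thesis
    using assms by (simp add: prod.remove mag_mult_strict_mono)
qed

text \<open>Take \<open>x = \<ominus> q / b\<close> if \<open>q\<close> is signed; if \<open>q\<close> is balanced, any \<open>x\<close> of the right modulus
  will do.\<close>

lemma exists_balancing_entry:
  assumes b: "signed b" "b \<noteq> 0" and q: "mag q = mag (b * z)"
  shows "\<exists>x. signed x \<and> mag x = mag z \<and> balanced (b * x + (q::'g::linordered_ab_group_add smax))"
proof -
  define x where "x = (if signed q then \<ominus> (q * sinv b) else smod z)"
  have "b * (q * sinv b) = q"
    using sinv_right[OF b] by (metis mult.left_commute mult.right_neutral)
  then have bx: "signed q \<Longrightarrow> b * x = \<ominus> q"
    by (simp add: x_def sminus_mult_right)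
  have mag_bx: "mag (b * x) = mag (b * z)"
    using bx q mag_mult_cong[of b b "smod z" z] by (cases "signed q") (simp_all add: x_def)
  then have "mag x = mag z"
    using mag_mult_cancel_left b(2) by blast
  moreover have "signed x"
    using b by (auto simp: x_def intro!: signed_mult signed_sinv)
  moreover have "balanced (b * x + q)"
  proof (cases "signed q")
    case True
    then show ?thesis
      using bx balanced_add_sminus_self[of q] by (simp add: add.commute)
  next
    case False
    then have "balanced (q + b * x)"
      using signed_or_balanced mag_bx q by (intro balanced_add_smaller) auto
    then show ?thesis
      by (simp add: add.commute)
  qed
  ultimately show ?thesis
    by blast
qed

section \<open>Permutations and the adjugate\<close>

definition psign :: "(nat \<Rightarrow> nat) \<Rightarrow> 'g::linordered_ab_group_add smax" where
  "psign p = (if evenperm p then 1 else \<ominus> 1)"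

lemma sminus_one_square: "\<ominus> 1 * \<ominus> 1 = (1::'g::linordered_ab_group_add smax)"
  by (simp add: one_smax_def)

lemma sminus_one_power: "(\<ominus> 1) ^ m = (if even m then 1 else \<ominus> 1 :: 'g::linordered_ab_group_add smax)"
  by (induction m) (auto simp: sminus_one_square)

lemma psign_id [simp]: "psign id = 1"
  by (simp add: psign_def)

lemma psign_comp:
  "permutation p \<Longrightarrow> permutation q \<Longrightarrow> psign (p \<circ> q) = psign p * (psign q :: 'g::linordered_ab_group_add smax)"
  by (auto simp: psign_def evenperm_comp sminus_one_square)

lemma psign_inv: "permutation p \<Longrightarrow> psign (inv p) = psign p"
  by (simp add: psign_def evenperm_inv)

lemma psign_comp_transpose:
  "permutation p \<Longrightarrow> a \<noteq> b \<Longrightarrow> psign (p \<circ> transpose a b) = \<ominus> (psign p :: 'g::linordered_ab_group_add smax)"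
  by (auto simp: psign_def evenperm_comp evenperm_swap permutation_swap_id)

lemma mag_psign_mult [simp]: "mag (psign p * x) = mag (x::'g::linordered_ab_group_add smax)"
  by (cases x) (auto simp: psign_def one_smax_def zero_smax_def)

lemma sdet_psign: "sdet n M = (\<Sum>\<sigma> | \<sigma> permutes {..<n}. psign \<sigma> * (\<Prod>i<n. M i (\<sigma> i)))"
  by (simp add: sdet_def psign_def atLeast0LessThan)

text \<open>For \<open>p \<le> m\<close>, the cycle \<open>p \<mapsto> p+1 \<mapsto> \<dots> \<mapsto> m \<mapsto> p\<close>; it re-inserts the index \<open>p\<close>
  removed by \<open>skip p\<close>.\<close>

definition skip_cycle :: "nat \<Rightarrow> nat \<Rightarrow> nat \<Rightarrow> nat" where
  "skip_cycle m p r = (if r < m then skip p r else if r = m then p else r)"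

lemma skip_cycle_step: "p < m \<Longrightarrow> skip_cycle m p = transpose p (Suc p) \<circ> skip_cycle m (Suc p)"
  by (auto simp: fun_eq_iff skip_cycle_def skip_def transpose_def)

lemma skip_cycle_permutes_evenperm:
  "p \<le> m \<Longrightarrow> skip_cycle m p permutes {..m} \<and> evenperm (skip_cycle m p) = even (m - p)"
proof (induction p rule: inc_induct)
  case base
  have "skip_cycle m m = id"
    by (auto simp: fun_eq_iff skip_cycle_def skip_def)
  then show ?case
    by (metis permutes_id evenperm_id diff_self_eq_0 even_zero)
next
  case (step p)
  have swap: "transpose p (Suc p) permutes {..m}"
    using step.hyps by (intro permutes_swap_id) auto
  have "permutation (skip_cycle m (Suc p))"
    using step.IH permutation_permutes by blast
  then have "evenperm (skip_cycle m p) = even (m - p)"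
    unfolding skip_cycle_step[OF step.hyps(2)] using step.IH step.hyps
    by (subst evenperm_comp) (auto simp: evenperm_swap permutation_swap_id Suc_diff_Suc)
  moreover have "skip_cycle m p permutes {..m}"
    unfolding skip_cycle_step[OF step.hyps(2)] using step.IH swap by (blast intro: permutes_compose)
  ultimately show ?case
    by blast
qed

lemma skip_cycle_permutes: "p \<le> m \<Longrightarrow> skip_cycle m p permutes {..m}"
  and psign_skip_cycle: "p \<le> m \<Longrightarrow> psign (skip_cycle m p) = (\<ominus> 1) ^ (m - p)"
  using skip_cycle_permutes_evenperm by (auto simp: psign_def sminus_one_power)

lemma skip_image: "p \<le> m \<Longrightarrow> skip p ` {..<m} = {..m} - {p}"
proof (intro equalityI subsetI)
  fix x assume "p \<le> m" "x \<in> {..m} - {p}"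
  then have "x = skip p (if x < p then x else x - 1)" "(if x < p then x else x - 1) < m"
    by (auto simp: skip_def)
  then show "x \<in> skip p ` {..<m}"
    by blast
qed (auto simp: skip_def)

lemma sminus_one_power_parity:
  "even (a + b) = even (c + d) \<Longrightarrow>
   (\<ominus> 1) ^ a * (\<ominus> 1) ^ b = ((\<ominus> 1) ^ (c + d) :: 'g::linordered_ab_group_add smax)"
  by (auto simp: sminus_one_power sminus_one_square)

text \<open>A permutation \<open>s\<close> of the minor \<open>{..<m}\<close> lifted to \<open>{..m}\<close>: it sends \<open>j\<close> to \<open>i\<close> and
  \<open>skip j r\<close> to \<open>skip i (s r)\<close>.\<close>

definition lift_perm :: "nat \<Rightarrow> nat \<Rightarrow> nat \<Rightarrow> (nat \<Rightarrow> nat) \<Rightarrow> nat \<Rightarrow> nat" where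
  "lift_perm m i j s = skip_cycle m i \<circ> s \<circ> inv (skip_cycle m j)"

lemma bij_betw_lift_perm:
  assumes "i \<le> m" "j \<le> m"
  shows "bij_betw (lift_perm m i j) {s. s permutes {..<m}} {p. p permutes {..m} \<and> p j = i}"
proof (rule bij_betw_byWitness[where f'="\<lambda>p. inv (skip_cycle m i) \<circ> p \<circ> skip_cycle m j"])
  have ci: "skip_cycle m i permutes {..m}" "skip_cycle m i m = i"
    and cj: "skip_cycle m j permutes {..m}" "skip_cycle m j m = j"
    using assms skip_cycle_permutes by (auto simp: skip_cycle_def)
  have "inv (skip_cycle m i) \<circ> lift_perm m i j s \<circ> skip_cycle m j = s"
    and "lift_perm m i j (inv (skip_cycle m i) \<circ> p \<circ> skip_cycle m j) = p" for s p
    by (simp_all add: lift_perm_def fun_eq_iff permutes_inverses[OF ci(1)] permutes_inverses[OF cj(1)])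
  then show "\<forall>s\<in>{s. s permutes {..<m}}. inv (skip_cycle m i) \<circ> lift_perm m i j s \<circ> skip_cycle m j = s"
    and "\<forall>p\<in>{p. p permutes {..m} \<and> p j = i}.
      lift_perm m i j (inv (skip_cycle m i) \<circ> p \<circ> skip_cycle m j) = p"
    by simp_all
  show "lift_perm m i j ` {s. s permutes {..<m}} \<subseteq> {p. p permutes {..m} \<and> p j = i}"
  proof safe
    fix s assume "s permutes {..<m}"
    then have "s permutes {..m}" "s m = m"
      by (auto intro: permutes_subset permutes_not_in)
    then show "lift_perm m i j s permutes {..m}" "lift_perm m i j s j = i"
      using ci cj permutes_inverses(2)[OF cj(1), of m]
      by (auto simp: lift_perm_def intro!: permutes_compose permutes_inv)
  qed
  show "(\<lambda>p. inv (skip_cycle m i) \<circ> p \<circ> skip_cycle m j) ` {p. p permutes {..m} \<and> p j = i}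
      \<subseteq> {s. s permutes {..<m}}"
  proof (rule image_subsetI)
    fix p assume "p \<in> {p. p permutes {..m} \<and> p j = i}"
    then have p: "p permutes {..m}" "p j = i"
      by auto
    have "(inv (skip_cycle m i) \<circ> p \<circ> skip_cycle m j) permutes {..m}"
      using ci cj p by (intro permutes_compose permutes_inv)
    moreover have "(inv (skip_cycle m i) \<circ> p \<circ> skip_cycle m j) m = m"
      using permutes_inverses(2)[OF ci(1), of m] ci cj p by simp
    ultimately have "(inv (skip_cycle m i) \<circ> p \<circ> skip_cycle m j) permutes {..<m}"
      by (elim permutes_superset) (auto simp: less_le)
    then show "inv (skip_cycle m i) \<circ> p \<circ> skip_cycle m j \<in> {s. s permutes {..<m}}"
      by simp
  qed
qed

lemma psign_lift_perm:
  assumes "i \<le> m" "j \<le> m" "s permutes {..<m}"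
  shows "psign (lift_perm m i j s) = (\<ominus> 1) ^ (i + j) * (psign s :: 'g::linordered_ab_group_add smax)"
proof -
  have "permutation (skip_cycle m i)" "permutation (skip_cycle m j)" "permutation s"
    using assms skip_cycle_permutes by (auto simp: permutation_permutes intro: permutes_imp_permutation)
  then have "psign (lift_perm m i j s) =
      psign (skip_cycle m i) * psign (skip_cycle m j) * (psign s :: 'g smax)"
    by (simp add: lift_perm_def psign_comp psign_inv permutation_compose permutation_inverse ac_simps)
  also have "psign (skip_cycle m i) * psign (skip_cycle m j) = ((\<ominus> 1) ^ (i + j) :: 'g smax)"
    using sminus_one_power_parity[of "m - i" "m - j" i j] assms by (simp add: psign_skip_cycle)
  finally show ?thesis .
qed

lemma prod_lift_perm:
  assumes "i \<le> m" "j \<le> m" "s permutes {..<m}"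
  shows "(\<Prod>r\<in>{..m} - {j}. M r (lift_perm m i j s r)) = (\<Prod>r<m. M (skip j r) (skip i (s r)))"
proof -
  have cj: "skip_cycle m j permutes {..m}"
    using assms skip_cycle_permutes by blast
  have "skip_cycle m j ` {..<m} = skip j ` {..<m}"
    by (rule image_cong) (simp_all add: skip_cycle_def)
  then have "{..m} - {j} = skip_cycle m j ` {..<m}"
    using skip_image[OF assms(2)] by simp
  then have "(\<Prod>r\<in>{..m} - {j}. M r (lift_perm m i j s r)) =
      (\<Prod>r<m. M (skip_cycle m j r) (lift_perm m i j s (skip_cycle m j r)))"
    using permutes_inj_on[OF cj] by (simp add: prod.reindex)
  also have "\<dots> = (\<Prod>r<m. M (skip j r) (skip i (s r)))"
  proof (rule prod.cong)
    fix r assume "r \<in> {..<m}"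
    moreover have "lift_perm m i j s (skip_cycle m j r) = skip_cycle m i (s r)"
      by (simp add: lift_perm_def permutes_inverses(2)[OF cj])
    ultimately show "M (skip_cycle m j r) (lift_perm m i j s (skip_cycle m j r)) =
        M (skip j r) (skip i (s r))"
      using permutes_in_image[OF assms(3)] by (simp add: skip_cycle_def)
  qed simp
  finally show ?thesis .
qed

lemma sadj_expansion:
  fixes M :: "nat \<Rightarrow> nat \<Rightarrow> 'g::linordered_ab_group_add smax"
  assumes "i < n" "j < n"
  shows "sadj n M i j = (\<Sum>p | p permutes {..<n} \<and> p j = i. psign p * (\<Prod>r\<in>{..<n} - {j}. M r (p r)))"
proof -
  obtain m where n: "n = Suc m"
    using assms by (cases n) auto
  have ij: "i \<le> m" "j \<le> m"
    using assms n by auto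
  have "sadj n M i j =
      (\<Sum>s | s permutes {..<m}. (\<ominus> 1) ^ (i + j) * (psign s * (\<Prod>r<m. M (skip j r) (skip i (s r)))))"
    by (simp add: sadj_def n sdet_psign minor_def sum_distrib_left)
  also have "\<dots> = (\<Sum>s | s permutes {..<m}. psign (lift_perm m i j s) *
      (\<Prod>r\<in>{..m} - {j}. M r (lift_perm m i j s r)))"
    using ij by (intro sum.cong) (simp_all add: psign_lift_perm prod_lift_perm mult.assoc)
  also have "\<dots> = (\<Sum>p | p permutes {..m} \<and> p j = i. psign p * (\<Prod>r\<in>{..m} - {j}. M r (p r)))"
    using sum.reindex_bij_betw[OF bij_betw_lift_perm[OF ij]] by simp
  finally show ?thesis
    by (simp add: n lessThan_Suc_atMost)
qed

lemma funpow_less_dist1: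
  assumes y: "y \<in> orbit f x" "y \<noteq> x" and m: "0 < m" "m < funpow_dist1 f x y"
  shows "(f ^^ m) x \<noteq> y" "(f ^^ m) x \<noteq> x"
proof -
  define d where "d = funpow_dist1 f x y"
  have not_y: "(f ^^ m') x \<noteq> y" if "0 < m'" "m' < d" for m'
    using that unfolding d_def by (rule funpow_dist1_least)
  then show "(f ^^ m) x \<noteq> y"
    using m by (simp add: d_def)
  show "(f ^^ m) x \<noteq> x"
  proof
    assume "(f ^^ m) x = x"
    then have "(f ^^ (d mod m)) x = y"
      using funpow_mod_eq[of m f x d] funpow_dist1_prop[OF y(1)] by (simp add: d_def)
    moreover have "d mod m < d"
      using m mod_less_divisor[of m d] unfolding d_def[symmetric] by linarith
    ultimately show False
      using not_y[of "d mod m"] y(2) by (cases "d mod m = 0") auto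
  qed
qed

lemma funpow_comp_transpose:
  assumes i: "i \<in> orbit t k" "i \<noteq> k" and m: "0 < m" "m \<le> funpow_dist1 t k i"
  shows "((t \<circ> transpose i k) ^^ m) i = (t ^^ m) k"
proof -
  define u where "u = t \<circ> transpose i k"
  have "(u ^^ m) i = (t ^^ m) k"
    using m
  proof (induction m)
    case (Suc m)
    show ?case
    proof (cases "m = 0")
      case False
      then have "(u ^^ m) i = (t ^^ m) k" "(t ^^ m) k \<noteq> i" "(t ^^ m) k \<noteq> k"
        using Suc funpow_less_dist1[OF i] by auto
      then have "u ((u ^^ m) i) = t ((t ^^ m) k)"
        by (simp add: u_def)
      then show ?thesis
        by simp
    qed (simp add: u_def)
  qed simp
  then show ?thesis
    by (simp add: u_def)
qed

text \<open>Composing with the transposition of two points of one cycle splits that cycle: up to the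
  return to \<open>i\<close>, \<open>t \<circ> (i k)\<close> follows from \<open>i\<close> the path of \<open>t\<close> from \<open>k\<close>, which avoids \<open>k\<close>.\<close>

lemma transpose_splits_orbit:
  assumes t: "t permutes S" "finite S" and ik: "i \<noteq> k" and k: "k \<in> orbit t i"
  shows "k \<notin> orbit (t \<circ> transpose i k) i"
proof
  assume k_u: "k \<in> orbit (t \<circ> transpose i k) i"
  have "permutation t"
    using t by (auto simp: permutation_permutes)
  then have i: "i \<in> orbit t k"
    by (rule orbit_swap[OF permutation_self_in_orbit k])
  define e where "e = funpow_dist1 t k i"
  have "0 < e" and t_e: "(t ^^ e) k = i"
    using funpow_dist1_prop[OF i] by (simp_all add: e_def)
  have u_pow: "((t \<circ> transpose i k) ^^ m) i = (t ^^ m) k" if "0 < m" "m \<le> e" for m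
    using funpow_comp_transpose[OF i ik] that by (simp add: e_def)
  have "((t \<circ> transpose i k) ^^ e) i = i"
    using u_pow[OF \<open>0 < e\<close> order.refl] t_e by simp
  then have "orbit (t \<circ> transpose i k) i = {((t \<circ> transpose i k) ^^ m) i | m. m < e}"
    by (rule orbit_altdef_bounded[OF _ \<open>0 < e\<close>])
  then have "\<exists>m<e. ((t \<circ> transpose i k) ^^ m) i = k"
    using k_u by (auto simp: eq_commute[of k])
  then obtain m where m: "m < e" "((t \<circ> transpose i k) ^^ m) i = k"
    by blast
  show False
  proof (cases "m = 0")
    case False
    then show False
      using m u_pow[of m] funpow_less_dist1(2)[OF i ik, of m] by (simp add: e_def)
  qed (use m ik in simp)
qed

lemma bij_betw_orbit:
  assumes "t permutes S" "finite S" "x \<in> S"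
  shows "bij_betw t (orbit t x) (orbit t x)"
proof -
  have "finite (orbit t x)"
    using assms permutes_orbit_subset finite_subset by metis
  moreover have "t ` orbit t x \<subseteq> orbit t x"
    using cyclic_on_inI[OF cyclic_on_orbit[OF assms(1,2)]] by blast
  ultimately show ?thesis
    using endo_inj_surj[of "orbit t x" t] permutes_inj_on[OF assms(1)] by (simp add: bij_betw_def)
qed

section \<open>The adjugate column of a shifted TPD matrix\<close>

lemma mat_vec_split:
  "i < n \<Longrightarrow> mat_vec n M v i = M i i * v i + (\<Sum>s\<in>{..<n} - {i}. M i s * v s)"
  by (simp add: mat_vec_def sum.remove[of _ i])

text \<open>An abstraction of \<open>B = \<gamma>\<^sub>k I \<ominus> A\<close> for \<open>A\<close> TPD and \<open>\<gamma>\<^sub>k\<close> simple.\<close>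

locale shifted_tpd =
  fixes n k :: nat and B :: "nat \<Rightarrow> nat \<Rightarrow> 'g::linordered_ab_group_add smax"
  assumes k_less: "k < n"
    and balanced_pivot: "balanced (B k k)"
    and signed_diag: "\<And>r. r < n \<Longrightarrow> r \<noteq> k \<Longrightarrow> signed (B r r)"
    and diag_nonzero: "\<And>r. r < n \<Longrightarrow> B r r \<noteq> 0"
    and diag_dominant: "\<And>r c. r < n \<Longrightarrow> c < n \<Longrightarrow> r \<noteq> c \<Longrightarrow> mag (B r c * B r c) < mag (B r r * B c c)"
begin

definition adj_col :: "nat \<Rightarrow> 'g smax" where
  "adj_col i = sadj n B i k"

definition off_pivot_prod :: "(nat \<Rightarrow> nat) \<Rightarrow> 'g smax" where
  "off_pivot_prod p = (\<Prod>r\<in>{..<n} - {k}. B r (p r))"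

lemma adj_col_expansion:
  assumes "i < n"
  shows "adj_col i = (\<Sum>p | p permutes {..<n} \<and> p k = i. psign p * off_pivot_prod p)"
  unfolding adj_col_def off_pivot_prod_def using assms k_less by (rule sadj_expansion)

lemma finite_permutations_with: "finite {p. p permutes {..<n} \<and> P p}"
  using finite_permutations[of "{..<n}"] by (rule finite_subset[rotated]) auto

lemma diag_dominant_le: "r < n \<Longrightarrow> c < n \<Longrightarrow> mag (B r c * B r c) \<le> mag (B r r * B c c)"
  by (cases "r = c") (auto intro: less_imp_le diag_dominant)

text \<open>Squaring, \<open>|\<Prod> b\<^bsub>r f(r)\<^esub>|\<^sup>2 \<preceq> \<Prod> |b\<^bsub>rr\<^esub> b\<^bsub>f(r) f(r)\<^esub>|\<close> factorwise, and the second
  diagonal factors are a reindexing of the first.\<close>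

lemma prod_perm_le_diag:
  assumes C: "C \<subseteq> {..<n}" and f: "bij_betw f C C"
  shows "mag (\<Prod>r\<in>C. B r (f r)) \<le> mag (\<Prod>r\<in>C. B r r)"
    and "r0 \<in> C \<Longrightarrow> f r0 \<noteq> r0 \<Longrightarrow> mag (\<Prod>r\<in>C. B r (f r)) < mag (\<Prod>r\<in>C. B r r)"
proof -
  have fin: "finite C"
    using C finite_subset by blast
  have in_range: "r < n" "f r < n" if "r \<in> C" for r
    using that C bij_betwE[OF f] by auto
  have square: "(\<Prod>r\<in>C. B r (f r)) * (\<Prod>r\<in>C. B r (f r)) = (\<Prod>r\<in>C. B r (f r) * B r (f r))"
    by (simp add: prod.distrib)
  have diag: "(\<Prod>r\<in>C. B r r * B (f r) (f r)) = (\<Prod>r\<in>C. B r r) * (\<Prod>r\<in>C. B r r)"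
    by (simp add: prod.distrib prod.reindex_bij_betw[OF f, of "\<lambda>r. B r r"])
  have "mag (\<Prod>r\<in>C. B r (f r) * B r (f r)) \<le> mag (\<Prod>r\<in>C. B r r * B (f r) (f r))"
    using in_range by (intro mag_prod_mono diag_dominant_le) auto
  then show "mag (\<Prod>r\<in>C. B r (f r)) \<le> mag (\<Prod>r\<in>C. B r r)"
    unfolding square[symmetric] diag by (rule mag_square_le_imp_le)
  assume r0: "r0 \<in> C" "f r0 \<noteq> r0"
  have "mag (\<Prod>r\<in>C. B r (f r) * B r (f r)) < mag (\<Prod>r\<in>C. B r r * B (f r) (f r))"
    using in_range r0 by (intro mag_prod_strict_mono[OF fin _ r0(1)] diag_dominant_le diag_dominant)
      (auto simp: diag_nonzero)
  then show "mag (\<Prod>r\<in>C. B r (f r)) < mag (\<Prod>r\<in>C. B r r)"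
    unfolding square[symmetric] diag by (rule mag_square_less_imp_less)
qed

text \<open>The term of \<open>(B adj_col)\<^sub>i\<close> indexed by the permutation \<open>p\<close> (up to its sign): the entry
  \<open>b\<^bsub>i p(k)\<^esub>\<close> times the \<open>p\<close>-term of \<open>adj_col (p k)\<close>.\<close>

definition row_term :: "nat \<Rightarrow> (nat \<Rightarrow> nat) \<Rightarrow> 'g smax" where
  "row_term i p = B i (p k) * off_pivot_prod p"

text \<open>If the cycle \<open>C\<close> of \<open>t\<close> through \<open>i\<close> avoids \<open>k\<close>, let \<open>\<rho>\<close> fix \<open>C - {i}\<close>, send \<open>i \<mapsto> t k\<close>,
  \<open>k \<mapsto> i\<close> and agree with \<open>t\<close> elsewhere: this trades the product of \<open>B\<close> along \<open>C\<close> for the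
  diagonal product on \<open>C\<close>, which is strictly larger.\<close>

lemma dominating_perm_cycle_avoiding_pivot:
  assumes t: "t permutes {..<n}" and i: "i < n" "i \<noteq> k" and k_C: "k \<notin> orbit t i" and t_i: "t i \<noteq> i"
  shows "\<exists>\<rho>. \<rho> permutes {..<n} \<and> \<rho> k = i \<and> (row_term i t = 0 \<or> mag (row_term i t) < mag (row_term i \<rho>))"
proof -
  define C where "C = orbit t i"
  have C_sub: "C \<subseteq> {..<n}"
    unfolding C_def using t i by (intro permutes_orbit_subset) auto
  then have fin_C: "finite C"
    using finite_subset by blast
  have i_C: "i \<in> C"
    unfolding C_def using t by (intro permutation_self_in_orbit) (auto simp: permutation_permutes)
  have bij: "bij_betw t C C"
    unfolding C_def using t i by (intro bij_betw_orbit) auto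
  define \<rho> where "\<rho> = perm_restrict t ({..<n} - C) \<circ> transpose i k"
  have \<rho>: "\<rho> permutes {..<n}"
    unfolding \<rho>_def C_def using i k_less perm_restrict_diff_cyclic[OF t cyclic_on_orbit[OF t]]
    by (intro permutes_compose permutes_swap_id) (auto intro: permutes_subset)
  have \<rho>_k: "\<rho> k = i" and \<rho>_i: "\<rho> i = t k"
    using i_C k_C k_less by (simp_all add: \<rho>_def C_def perm_restrict_simps)
  have \<rho>_C: "\<rho> r = r" if "r \<in> C - {i}" for r
    using that k_C by (auto simp: \<rho>_def C_def perm_restrict_simps transpose_def)
  have \<rho>_out: "\<rho> r = t r" if "r \<in> {..<n} - C - {k}" for r
    using that i_C by (auto simp: \<rho>_def perm_restrict_simps transpose_def)
  have split: "{..<n} - {k} = C \<union> ({..<n} - C - {k})"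
    using C_sub k_C by (auto simp: C_def)
  define Z where "Z = B i (t k) * (\<Prod>r\<in>{..<n} - C - {k}. B r (t r))"
  have term_t: "row_term i t = Z * (\<Prod>r\<in>C. B r (t r))"
    unfolding row_term_def off_pivot_prod_def split using fin_C
    by (subst prod.union_disjoint) (auto simp: Z_def ac_simps)
  have "off_pivot_prod \<rho> = (\<Prod>r\<in>C. B r (\<rho> r)) * (\<Prod>r\<in>{..<n} - C - {k}. B r (t r))"
    unfolding off_pivot_prod_def split using fin_C \<rho>_out
    by (subst prod.union_disjoint) auto
  also have "(\<Prod>r\<in>C. B r (\<rho> r)) = B i (t k) * (\<Prod>r\<in>C - {i}. B r r)"
    using fin_C i_C \<rho>_C by (simp add: prod.remove \<rho>_i)
  finally have term_\<rho>: "row_term i \<rho> = Z * (\<Prod>r\<in>C. B r r)"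
    using fin_C i_C by (simp add: row_term_def \<rho>_k Z_def prod.remove ac_simps)
  have "mag (\<Prod>r\<in>C. B r (t r)) < mag (\<Prod>r\<in>C. B r r)"
    using prod_perm_le_diag(2)[OF C_sub bij i_C t_i] .
  then have "Z = 0 \<or> mag (Z * (\<Prod>r\<in>C. B r (t r))) < mag (Z * (\<Prod>r\<in>C. B r r))"
    using mag_mult_strict_mono[OF _ order.refl, of _ _ Z] by (auto simp: mult.commute[of Z])
  then show ?thesis
    using \<rho> \<rho>_k term_t term_\<rho> by auto
qed

lemma dominating_perm:
  assumes t: "t permutes {..<n}" and i: "i < n" "i \<noteq> k" and t_k: "t k \<noteq> i" and t_i: "t i \<noteq> i"
  shows "\<exists>\<rho>. \<rho> permutes {..<n} \<and> \<rho> k = i \<and> (row_term i t = 0 \<or> mag (row_term i t) < mag (row_term i \<rho>))"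
proof (cases "k \<in> orbit t i")
  case True
  \<comment> \<open>composing with \<open>(i k)\<close> splits the cycle and leaves the term unchanged\<close>
  define u where "u = t \<circ> transpose i k"
  have u: "u permutes {..<n}"
    unfolding u_def using t i k_less by (intro permutes_compose permutes_swap_id) auto
  have "k \<notin> orbit u i"
    unfolding u_def using transpose_splits_orbit[OF t _ i(2) True] by simp
  moreover have "u i \<noteq> i"
    using t_k by (simp add: u_def)
  moreover have "(\<Prod>r\<in>{..<n} - {k} - {i}. B r (u r)) = (\<Prod>r\<in>{..<n} - {k} - {i}. B r (t r))"
    by (rule prod.cong) (auto simp: u_def transpose_def)
  then have "row_term i u = row_term i t"
    using i by (simp add: row_term_def off_pivot_prod_def prod.remove[of _ i] u_def ac_simps)
  ultimately show ?thesis
    using dominating_perm_cycle_avoiding_pivot[OF u i] by simp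
qed (use dominating_perm_cycle_avoiding_pivot[OF assms(1-3) _ t_i] in simp)

lemma adj_col_pivot: "adj_col k = (\<Prod>r\<in>{..<n} - {k}. B r r)"
proof -
  have "adj_col k = psign id * off_pivot_prod id"
    unfolding adj_col_expansion[OF k_less]
  proof (rule sum_eq_dominant[OF finite_permutations_with, where d=id])
    fix p assume "p \<in> {p. p permutes {..<n} \<and> p k = k}"
    then have p: "p permutes {..<n}" "p k = k"
      by auto
    show "psign p * off_pivot_prod p = 0 \<or> psign p * off_pivot_prod p = psign id * off_pivot_prod id \<or>
        mag (psign p * off_pivot_prod p) < mag (psign id * off_pivot_prod id)"
    proof (cases "p = id")
      case False
      then obtain r where r: "p r \<noteq> r"
        by (auto simp: fun_eq_iff)
      then have "r \<in> {..<n} - {k}"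
        using p permutes_not_in by fastforce
      moreover have "bij_betw p ({..<n} - {k}) ({..<n} - {k})"
        using bij_betw_DiffI[OF permutes_imp_bij[OF p(1)], of "{k}" "{k}"] p(2) k_less
        by (simp add: bij_betw_def)
      ultimately show ?thesis
        using prod_perm_le_diag(2)[of _ p] r by (simp add: off_pivot_prod_def)
    qed simp
  qed (simp_all add: permutes_id)
  then show ?thesis
    by (simp add: off_pivot_prod_def)
qed

lemma signed_adj_col_pivot: "signed (adj_col k)"
  unfolding adj_col_pivot using signed_diag by (intro signed_prod) auto

lemma adj_col_pivot_nonzero: "adj_col k \<noteq> 0"
  unfolding adj_col_pivot using diag_nonzero by (simp add: prod_eq_0_iff_smax)

lemma row_adj_col_expansion:
  assumes J: "J \<subseteq> {..<n}"
  shows "(\<Sum>s\<in>J. B i s * adj_col s) = (\<Sum>p | p permutes {..<n} \<and> p k \<in> J. psign p * row_term i p)"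
proof -
  define P where "P = {p. p permutes {..<n} \<and> p k \<in> J}"
  have "(\<Sum>s\<in>J. B i s * adj_col s) = (\<Sum>s\<in>J. \<Sum>p\<in>{p \<in> P. p k = s}. psign p * row_term i p)"
  proof (rule sum.cong[OF refl])
    fix s assume "s \<in> J"
    then have "{p \<in> P. p k = s} = {p. p permutes {..<n} \<and> p k = s}" "s < n"
      using J by (auto simp: P_def)
    then show "B i s * adj_col s = (\<Sum>p\<in>{p \<in> P. p k = s}. psign p * row_term i p)"
      by (simp add: adj_col_expansion sum_distrib_left row_term_def ac_simps)
  qed
  also have "\<dots> = (\<Sum>p\<in>P. psign p * row_term i p)"
    using finite_subset[OF J] unfolding P_def by (intro sum.group[OF finite_permutations_with]) auto
  finally show ?thesis
    by (simp add: P_def)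
qed

lemma off_pivot_prod_split:
  "i < n \<Longrightarrow> i \<noteq> k \<Longrightarrow> off_pivot_prod p = B i (p i) * (\<Prod>r\<in>{..<n} - {k} - {i}. B r (p r))"
  unfolding off_pivot_prod_def by (subst prod.remove[of _ i]) auto

text \<open>The terms with \<open>p i = i\<close> are, via \<open>p \<mapsto> p \<circ> (i k)\<close>, those of \<open>\<ominus> b\<^bsub>ii\<^esub> adj_col i\<close>.\<close>

lemma row_terms_fixing_row:
  assumes i: "i < n" "i \<noteq> k"
  shows "(\<Sum>p | p permutes {..<n} \<and> p i = i. psign p * row_term i p) = \<ominus> (B i i * adj_col i)"
proof -
  define tr where "tr = transpose i k"
  have tr: "tr permutes {..<n}"
    unfolding tr_def using i k_less by (intro permutes_swap_id) auto
  have tr_tr: "p \<circ> tr \<circ> tr = p" for p :: "nat \<Rightarrow> nat"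
    by (simp add: tr_def fun_eq_iff)
  have "\<ominus> (B i i * adj_col i) =
      (\<Sum>p | p permutes {..<n} \<and> p k = i. \<ominus> (B i i * (psign p * off_pivot_prod p)))"
    by (simp add: adj_col_expansion[OF i(1)] sum_distrib_left sminus_sum)
  also have "\<dots> = (\<Sum>p | p permutes {..<n} \<and> p i = i. psign p * row_term i p)"
  proof (rule sum.reindex_bij_witness[where i="\<lambda>p. p \<circ> tr" and j="\<lambda>p. p \<circ> tr"])
    fix p assume "p \<in> {p. p permutes {..<n} \<and> p k = i}"
    then have p: "p permutes {..<n}" "p k = i"
      by auto
    show "p \<circ> tr \<circ> tr = p"
      by (rule tr_tr)
    show "p \<circ> tr \<in> {p. p permutes {..<n} \<and> p i = i}"
      using permutes_compose[OF tr p(1)] p(2) by (simp add: tr_def)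
    have "psign (p \<circ> tr) = \<ominus> (psign p :: 'g smax)"
      unfolding tr_def using p i by (intro psign_comp_transpose) (auto simp: permutation_permutes)
    moreover have "(\<Prod>r\<in>{..<n} - {k} - {i}. B r ((p \<circ> tr) r)) = (\<Prod>r\<in>{..<n} - {k} - {i}. B r (p r))"
      by (rule prod.cong) (auto simp: tr_def transpose_def)
    ultimately show "psign (p \<circ> tr) * row_term i (p \<circ> tr) = \<ominus> (B i i * (psign p * off_pivot_prod p))"
      using p(2)
      by (simp add: row_term_def off_pivot_prod_split[OF i] tr_def sminus_mult_left sminus_mult_right
          ac_simps)
  next
    fix q assume "q \<in> {p. p permutes {..<n} \<and> p i = i}"
    then show "q \<circ> tr \<circ> tr = q" "q \<circ> tr \<in> {p. p permutes {..<n} \<and> p k = i}"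
      using permutes_compose[OF tr] tr_tr by (auto simp: tr_def)
  qed
  finally show ?thesis ..
qed

lemma row_term_moving_row_negligible:
  assumes p: "p permutes {..<n}" "p k \<noteq> i" "p i \<noteq> i" and i: "i < n" "i \<noteq> k"
  shows "psign p * row_term i p = 0 \<or> mag (psign p * row_term i p) < mag (\<ominus> (B i i * adj_col i))"
proof -
  obtain \<rho> where \<rho>: "\<rho> permutes {..<n}" "\<rho> k = i"
    and dom: "row_term i p = 0 \<or> mag (row_term i p) < mag (row_term i \<rho>)"
    using dominating_perm[OF p(1) i p(2,3)] by blast
  have "mag (psign \<rho> * off_pivot_prod \<rho>) \<le> mag (adj_col i)"
    unfolding adj_col_expansion[OF i(1)] using \<rho> by (intro mag_le_sum finite_permutations_with) simp
  then have "mag (row_term i \<rho>) \<le> mag (B i i * adj_col i)"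
    unfolding row_term_def \<rho>(2) by (intro mag_mult_mono) auto
  then show ?thesis
    using dom by auto
qed

theorem adj_col_row_exact:
  assumes i: "i < n" "i \<noteq> k"
  shows "(\<Sum>s\<in>{..<n} - {i}. B i s * adj_col s) = \<ominus> (B i i * adj_col i)"
proof -
  define contrib where "contrib p = psign p * row_term i p" for p
  define Q where "Q = {p. p permutes {..<n} \<and> p k \<in> {..<n} - {i}}"
  have fixing: "Q \<inter> {p. p i = i} = {p. p permutes {..<n} \<and> p i = i}"
    using i k_less permutes_in_image[of _ "{..<n}" k]
    by (auto simp: Q_def dest: permutes_inj[THEN injD])
  have "(\<Sum>s\<in>{..<n} - {i}. B i s * adj_col s) = sum contrib Q"
    unfolding Q_def contrib_def by (rule row_adj_col_expansion) auto
  also have "\<dots> = sum contrib (Q \<inter> {p. p i = i}) + sum contrib (Q - {p. p i = i})"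
    using finite_permutations_with unfolding Q_def by (rule sum.Int_Diff)
  also have "sum contrib (Q \<inter> {p. p i = i}) = \<ominus> (B i i * adj_col i)"
    unfolding fixing contrib_def by (rule row_terms_fixing_row[OF i])
  also have "\<ominus> (B i i * adj_col i) + sum contrib (Q - {p. p i = i}) = \<ominus> (B i i * adj_col i)"
    using row_term_moving_row_negligible[OF _ _ _ i] finite_permutations_with
    by (intro add_sum_absorb) (auto simp: Q_def contrib_def)
  finally show ?thesis .
qed

lemma mag_pivot_row_le:
  assumes s: "s < n"
  shows "mag (B k s * adj_col s) \<le> mag (B k k * adj_col k)"
proof -
  have diag: "B k k * adj_col k = (\<Prod>r<n. B r r)"
    using k_less by (simp add: adj_col_pivot prod.remove[of _ k])
  have "mag (B k s * (psign p * off_pivot_prod p)) \<le> mag (\<Prod>r<n. B r r)"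
    if p: "p permutes {..<n}" "p k = s" for p
  proof -
    have "B k s * off_pivot_prod p = (\<Prod>r<n. B r (p r))"
      using k_less p(2) by (simp add: off_pivot_prod_def prod.remove[of _ k])
    then show ?thesis
      using prod_perm_le_diag(1)[OF _ permutes_imp_bij[OF p(1)]] by (simp add: mult.left_commute)
  qed
  then show ?thesis
    unfolding diag adj_col_expansion[OF s] sum_distrib_left
    by (subst mag_sum_le_iff[OF finite_permutations_with]) simp
qed

theorem balanced_row_adj_col:
  assumes i: "i < n"
  shows "balanced (mat_vec n B adj_col i)"
proof (cases "i = k")
  case True
  have "balanced (B k k * adj_col k + (\<Sum>s\<in>{..<n} - {k}. B k s * adj_col s))"
    using balanced_mult[OF balanced_pivot] mag_pivot_row_le
    by (intro balanced_add_smaller) (auto simp: mag_sum_le_iff)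
  then show ?thesis
    unfolding True mat_vec_split[OF k_less] .
next
  case False
  then show ?thesis
    by (simp add: mat_vec_split[OF i] adj_col_row_exact[OF i] balanced_add_sminus_self)
qed

definition exact_rows :: "(nat \<Rightarrow> 'g smax) \<Rightarrow> bool" where
  "exact_rows y \<longleftrightarrow> (\<forall>i<n. i \<noteq> k \<longrightarrow> (\<Sum>s\<in>{..<n} - {i}. B i s * y s) = \<ominus> (B i i * y i))"

text \<open>The potential \<open>|b\<^bsub>ii\<^esub>| |y\<^sub>i|\<^sup>2\<close> strictly increases along a dominant off-diagonal term of a
  row (\<open>potential_increase\<close>), so such terms cannot form cycles.\<close>

definition potential :: "(nat \<Rightarrow> 'g smax) \<Rightarrow> nat \<Rightarrow> 'g option" where
  "potential y i = mag (B i i * y i * y i)"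

lemma exact_rows_adj_col: "exact_rows adj_col"
  by (simp add: exact_rows_def adj_col_row_exact)

lemma exact_rows_scale: "exact_rows y \<Longrightarrow> exact_rows (\<lambda>i. c * y i)"
  by (auto simp: exact_rows_def sum_distrib_left[symmetric] sminus_mult_right mult.left_commute)

lemma potential_increase:
  assumes "i < n" "s < n" "i \<noteq> s" "mag (B i i * v i) \<le> mag (B i s * v s)" "v i \<noteq> 0"
  shows "potential v i < potential v s"
proof -
  have "v s \<noteq> 0"
    using assms diag_nonzero by auto
  have "mag ((B i i * v i) * (B i i * v i)) \<le> mag ((B i s * v s) * (B i s * v s))"
    by (rule mag_mult_mono[OF assms(4) assms(4)])
  also have "\<dots> = mag ((B i s * B i s) * (v s * v s))"
    by (simp add: ac_simps)
  also have "\<dots> < mag ((B i i * B s s) * (v s * v s))"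
    using diag_dominant[OF assms(1-3)] \<open>v s \<noteq> 0\<close> by (simp add: mag_mult_strict_mono)
  finally have "mag ((B i i * v i * v i) * B i i) < mag ((B s s * v s * v s) * B i i)"
    by (simp add: ac_simps)
  then show ?thesis
    unfolding potential_def by (rule mag_mult_less_cancel_right)
qed

lemma exact_rows_term_le:
  assumes "exact_rows y" "j < n" "j \<noteq> k" "i < n" "i \<noteq> j"
  shows "mag (B j i * y i) \<le> mag (B j j * y j)"
  using assms mag_le_sum[of "{..<n} - {j}" i "\<lambda>s. B j s * y s"] by (simp add: exact_rows_def)

lemma exact_rows_term_negligible:
  assumes y: "exact_rows y" and j: "j < n" "j \<noteq> k" and i: "i < n" "i \<noteq> j"
    and le: "potential y i \<le> potential y j"
  shows "B j i * y i = 0 \<or> mag (B j i * y i) < mag (B j j * y j)"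
proof (rule ccontr)
  assume "\<not> ?thesis"
  then have "B j i * y i \<noteq> 0" "mag (B j j * y j) \<le> mag (B j i * y i)"
    by auto
  moreover have "y j \<noteq> 0"
    using exact_rows_term_le[OF y j i] calculation by auto
  ultimately have "potential y j < potential y i"
    using j i by (intro potential_increase) auto
  then show False
    using le by simp
qed

lemma dominant_term_signed:
  assumes y: "exact_rows y" and i: "i < n" "i \<noteq> k" and s: "s < n" "s \<noteq> i"
    and eq: "B i s * y s = \<ominus> (B i i * y i)" and y_i: "signed (y i)" "y i \<noteq> 0"
  shows "signed (y s) \<and> y s \<noteq> 0 \<and> potential y i < potential y s"
proof -
  have "signed (B i s * y s)" "B i s * y s \<noteq> 0"
    unfolding eq using i y_i diag_nonzero signed_diag by (auto intro: signed_mult)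
  then have "signed (y s)" "y s \<noteq> 0"
    using signed_mult_factors by auto
  moreover have "potential y i < potential y s"
    using i s y_i eq by (intro potential_increase) auto
  ultimately show ?thesis
    by blast
qed

lemma off_diag_sum_eq_exact:
  assumes y: "exact_rows y" and i: "i < n" "i \<noteq> k" and y_i: "signed (y i)" "y i \<noteq> 0"
    and agree: "\<And>s. s \<in> {..<n} - {i} \<Longrightarrow> B i s * y s = \<ominus> (B i i * y i) \<Longrightarrow> v s = y s"
    and le: "\<And>s. s \<in> {..<n} - {i} \<Longrightarrow> mag (v s) \<le> mag (y s)"
  shows "(\<Sum>s\<in>{..<n} - {i}. B i s * v s) = \<ominus> (B i i * y i)"
proof -
  define x where "x = \<ominus> (B i i * y i)"
  have x: "signed x" "x \<noteq> 0"
    using i y_i diag_nonzero signed_diag by (auto simp: x_def intro: signed_mult)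
  have sum_y: "(\<Sum>s\<in>{..<n} - {i}. B i s * y s) = x"
    using y i by (simp add: exact_rows_def x_def)
  have terms: "B i s * y s = x \<or> mag (B i s * y s) < mag x" if "s \<in> {..<n} - {i}" for s
    using sum_eq_signed_terms[OF _ sum_y x that] by simp
  have "\<exists>d\<in>{..<n} - {i}. B i d * y d = x"
  proof (rule ccontr)
    assume "\<not> ?thesis"
    then have "mag (\<Sum>s\<in>{..<n} - {i}. B i s * y s) < mag x"
      using terms x by (subst mag_sum_less_iff) auto
    then show False
      using sum_y by simp
  qed
  then obtain d where d: "d \<in> {..<n} - {i}" "B i d * y d = x"
    by blast
  have "B i s * v s = 0 \<or> B i s * v s = x \<or> mag (B i s * v s) < mag x" if s: "s \<in> {..<n} - {i}" for s
  proof (cases "B i s * y s = x")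
    case False
    then have "mag (B i s * y s) < mag x"
      using terms s by auto
    moreover have "mag (B i s * v s) \<le> mag (B i s * y s)"
      using le s by (intro mag_mult_mono) auto
    ultimately show ?thesis
      by (meson le_less_trans)
  qed (use agree s in \<open>simp add: x_def\<close>)
  then show ?thesis
    unfolding x_def[symmetric] using d agree by (intro sum_eq_dominant[where d=d]) (auto simp: x_def)
qed

lemma balanced_row_dominant_term:
  assumes i: "i < n" "i \<noteq> k" and v_i: "signed (v i)" "v i \<noteq> 0" and bal: "balanced (mat_vec n B v i)"
  obtains s where "s < n" "s \<noteq> i" "mag (B i i * v i) \<le> mag (B i s * v s)"
proof -
  have "\<exists>s\<in>{..<n} - {i}. mag (B i i * v i) \<le> mag (B i s * v s)"
  proof (rule ccontr)
    assume "\<not> ?thesis"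
    then have "mag (\<Sum>s\<in>{..<n} - {i}. B i s * v s) < mag (B i i * v i)"
      using i v_i diag_nonzero by (subst mag_sum_less_iff) (auto simp: not_le)
    then have "mat_vec n B v i = B i i * v i"
      unfolding mat_vec_split[OF i(1)] by (rule add_absorb)
    moreover have "signed (B i i * v i)" "B i i * v i \<noteq> 0"
      using i v_i diag_nonzero signed_diag by (auto intro: signed_mult)
    ultimately show False
      using bal signed_balanced_eq_0 by metis
  qed
  then show thesis
    using that by blast
qed

lemma eigvec_pivot_nonzero:
  assumes signed: "\<forall>i<n. signed (v i)" and nonzero: "\<exists>i<n. v i \<noteq> 0"
    and rows: "\<forall>i<n. i \<noteq> k \<longrightarrow> balanced (mat_vec n B v i)"
  shows "v k \<noteq> 0"
proof -
  define NZ where "NZ = {i. i < n \<and> v i \<noteq> 0}"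
  have "finite NZ" "NZ \<noteq> {}"
    using nonzero by (auto simp: NZ_def)
  then obtain i where i: "i \<in> NZ" and max: "\<And>j. j \<in> NZ \<Longrightarrow> potential v j \<le> potential v i"
    using obtain_arg_max[where f="potential v"] by blast
  show ?thesis
  proof (cases "i = k")
    case False
    have "i < n" "v i \<noteq> 0"
      using i by (auto simp: NZ_def)
    then obtain s where s: "s < n" "s \<noteq> i" "mag (B i i * v i) \<le> mag (B i s * v s)"
      using balanced_row_dominant_term[OF \<open>i < n\<close> False] signed rows False \<open>i < n\<close> \<open>v i \<noteq> 0\<close>
      by blast
    then have "potential v i < potential v s" "v s \<noteq> 0"
      using \<open>i < n\<close> \<open>v i \<noteq> 0\<close> diag_nonzero by (auto intro: potential_increase)
    then show ?thesis
      using max[of s] s by (auto simp: NZ_def)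
  qed (use i in \<open>simp add: NZ_def\<close>)
qed

lemma balanced_rows_mag_le:
  assumes y: "exact_rows y" and signed: "\<forall>i<n. signed (v i)"
    and rows: "\<forall>i<n. i \<noteq> k \<longrightarrow> balanced (mat_vec n B v i)" and pivot: "v k = y k"
    and i: "i < n"
  shows "mag (v i) \<le> mag (y i)"
proof (rule ccontr)
  define Bad where "Bad = {i. i < n \<and> mag (y i) < mag (v i)}"
  assume "\<not> ?thesis"
  then have "finite Bad" "Bad \<noteq> {}"
    using i by (auto simp: Bad_def not_le)
  then obtain i where "i \<in> Bad" and max: "\<And>j. j \<in> Bad \<Longrightarrow> potential v j \<le> potential v i"
    using obtain_arg_max[where f="potential v"] by blast
  then have i: "i < n" "i \<noteq> k" and less: "mag (y i) < mag (v i)"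
    using pivot by (auto simp: Bad_def)
  then have "v i \<noteq> 0"
    by auto
  then obtain s where s: "s < n" "s \<noteq> i" "mag (B i i * v i) \<le> mag (B i s * v s)"
    using balanced_row_dominant_term[OF i] signed rows i \<open>v i \<noteq> 0\<close> by blast
  have "mag (B i s * y s) \<le> mag (B i i * y i)"
    using exact_rows_term_le[OF y i(1,2) s(1,2)] .
  also have "\<dots> < mag (B i i * v i)"
    using less diag_nonzero[OF i(1)] by (simp add: mag_mult_strict_mono mult.commute[of "B i i"])
  also have "\<dots> \<le> mag (B i s * v s)"
    using s(3) .
  finally have "s \<in> Bad"
    using s by (auto simp: Bad_def dest: mag_mult_less_cancel_left)
  moreover have "potential v i < potential v s"
    using i s \<open>v i \<noteq> 0\<close> by (intro potential_increase) auto
  ultimately show False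
    using max by (auto simp flip: not_less)
qed

lemma balanced_row_entry_eq:
  assumes y: "exact_rows y" and i: "i < n" "i \<noteq> k" and y_i: "signed (y i)" "y i \<noteq> 0"
    and v_i: "signed (v i)" and row: "balanced (mat_vec n B v i)"
    and agree: "\<And>s. s \<in> {..<n} - {i} \<Longrightarrow> B i s * y s = \<ominus> (B i i * y i) \<Longrightarrow> v s = y s"
    and le: "\<And>s. s \<in> {..<n} - {i} \<Longrightarrow> mag (v s) \<le> mag (y s)"
  shows "v i = y i"
proof -
  have "(\<Sum>s\<in>{..<n} - {i}. B i s * v s) = \<ominus> (B i i * y i)"
    using y_i agree le by (rule off_diag_sum_eq_exact[OF y i])
  then have "nabla (B i i * v i) (B i i * y i)"
    using row by (simp add: mat_vec_split[OF i(1)] nabla_def)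
  then have "B i i * v i = B i i * y i"
    using v_i y_i i signed_diag by (intro signed_nabla_eq signed_mult) auto
  then show "v i = y i"
    using i signed_diag diag_nonzero by (auto intro: signed_mult_cancel_left[of "B i i"])
qed

lemma balanced_rows_nabla:
  assumes y: "exact_rows y" and signed: "\<forall>i<n. signed (v i)"
    and rows: "\<forall>i<n. i \<noteq> k \<longrightarrow> balanced (mat_vec n B v i)" and pivot: "v k = y k"
    and i: "i < n"
  shows "nabla (v i) (y i)"
proof (rule ccontr)
  define Bad where "Bad = {i. i < n \<and> \<not> nabla (v i) (y i)}"
  assume "\<not> ?thesis"
  then have "finite Bad" "Bad \<noteq> {}"
    using i by (auto simp: Bad_def)
  then obtain i where "i \<in> Bad" and max: "\<And>j. j \<in> Bad \<Longrightarrow> potential y j \<le> potential y i"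
    using obtain_arg_max[where f="potential y"] by blast
  then have i: "i < n" "i \<noteq> k" and not_nabla: "\<not> nabla (v i) (y i)"
    using pivot by (auto simp: Bad_def)
  have le: "mag (v s) \<le> mag (y s)" if "s < n" for s
    using balanced_rows_mag_le[OF y signed rows pivot that] .
  show False
  proof (cases "signed (y i) \<and> y i \<noteq> 0")
    case False
    then have "balanced (\<ominus> (y i) + v i)"
      using signed_or_balanced le[OF i(1)] by (intro balanced_add_smaller) auto
    then show False
      using not_nabla by (simp add: nabla_def add.commute)
  next
    case True
    have "v s = y s" if s: "s \<in> {..<n} - {i}" and dom: "B i s * y s = \<ominus> (B i i * y i)" for s
    proof -
      have "signed (y s)" "potential y i < potential y s"
        using dominant_term_signed[OF y i _ _ dom] s True by auto
      then have "nabla (v s) (y s)"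
        using max[of s] s by (auto simp: Bad_def simp flip: not_less)
      then show "v s = y s"
        using signed s \<open>signed (y s)\<close> by (auto intro: signed_nabla_eq)
    qed
    then have "v i = y i"
      using True le signed rows i by (intro balanced_row_entry_eq[OF y i]) auto
    then show False
      using not_nabla by simp
  qed
qed

theorem eigvec_unique_up_to_scaling:
  assumes signed: "\<forall>i<n. signed (v i)" and nonzero: "\<exists>i<n. v i \<noteq> 0"
    and rows: "\<forall>i<n. balanced (mat_vec n B v i)"
  shows "\<exists>c. signed c \<and> c \<noteq> 0 \<and> (\<forall>i<n. nabla (v i) (c * adj_col i))"
proof (intro exI conjI allI impI)
  define c where "c = v k * sinv (adj_col k)"
  have "v k \<noteq> 0"
    using eigvec_pivot_nonzero signed nonzero rows by blast
  then show "signed c" "c \<noteq> 0"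
    using signed k_less signed_adj_col_pivot adj_col_pivot_nonzero
    by (auto simp: c_def intro: signed_mult signed_sinv)
  have "v k = c * adj_col k"
    using sinv_right[OF signed_adj_col_pivot adj_col_pivot_nonzero] by (simp add: c_def ac_simps)
  then show "nabla (v i) (c * adj_col i)" if "i < n" for i
    using balanced_rows_nabla[OF exact_rows_scale[OF exact_rows_adj_col] signed] rows that by blast
qed

definition signed_repr :: "(nat \<Rightarrow> 'g smax) \<Rightarrow> (nat \<Rightarrow> 'g smax) \<Rightarrow> bool" where
  "signed_repr y v \<longleftrightarrow> (\<forall>i<n. signed (v i) \<and> mag (v i) = mag (y i) \<and> (signed (y i) \<longrightarrow> v i = y i))"

lemma signed_repr_exists: "\<exists>v. signed_repr y v"
  by (rule exI[of _ "\<lambda>i. if signed (y i) then y i else smod (y i)"]) (simp add: signed_repr_def)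

lemma mag_mult_signed_repr: "signed_repr y v \<Longrightarrow> s < n \<Longrightarrow> mag (a * v s) = mag (a * y s)"
  using mag_mult_cong[of a a "v s" "y s"] by (simp add: signed_repr_def)

lemma balanced_pivot_row_signed_repr:
  assumes y_k: "signed (y k)" and dom: "\<And>s. s < n \<Longrightarrow> mag (B k s * y s) \<le> mag (B k k * y k)"
    and v: "signed_repr y v"
  shows "balanced (mat_vec n B v k)"
proof -
  have "balanced (B k k * y k + (\<Sum>s\<in>{..<n} - {k}. B k s * v s))"
    using balanced_mult[OF balanced_pivot] dom mag_mult_signed_repr[OF v]
    by (intro balanced_add_smaller) (auto simp: mag_sum_le_iff)
  moreover have "v k = y k"
    using v y_k k_less by (simp add: signed_repr_def)
  ultimately show ?thesis
    by (simp add: mat_vec_split[OF k_less])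
qed

lemma balanced_signed_row_signed_repr:
  assumes y: "exact_rows y" and v: "signed_repr y v" and i: "i < n" "i \<noteq> k" and y_i: "signed (y i)"
  shows "balanced (mat_vec n B v i)"
proof (cases "y i = 0")
  case True
  have "B i s * v s = 0" if "s \<in> {..<n} - {i}" for s
    using exact_rows_term_le[OF y i, of s] mag_mult_signed_repr[OF v, of s "B i s"] that True by auto
  then have "(\<Sum>s\<in>{..<n} - {i}. B i s * v s) = 0"
    by (rule sum.neutral[rule_format])
  moreover have "v i = 0"
    using v i True by (simp add: signed_repr_def)
  ultimately show ?thesis
    by (simp add: mat_vec_split[OF i(1)])
next
  case False
  have "v s = y s" if "s \<in> {..<n} - {i}" "B i s * y s = \<ominus> (B i i * y i)" for s
    using dominant_term_signed[OF y i, of s] v that y_i False by (auto simp: signed_repr_def)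
  then have "(\<Sum>s\<in>{..<n} - {i}. B i s * v s) = \<ominus> (B i i * y i)"
    using v y_i False by (intro off_diag_sum_eq_exact[OF y i]) (auto simp: signed_repr_def)
  moreover have "v i = y i"
    using v i y_i by (simp add: signed_repr_def)
  ultimately show ?thesis
    by (simp add: mat_vec_split[OF i(1)] balanced_add_sminus_self)
qed

lemma mat_vec_negligible_column:
  assumes w: "signed_repr y w" and j: "j < n" and i: "i < n" "j \<noteq> i"
    and negligible: "B j i * y i = 0 \<or> mag (B j i * y i) < mag (B j j * y j)"
  shows "mat_vec n B w j = (\<Sum>s\<in>{..<n} - {i}. B j s * w s)"
proof -
  have "mag (B j j * y j) \<le> mag (\<Sum>s\<in>{..<n} - {i}. B j s * w s)"
    using mag_le_sum[of "{..<n} - {i}" j "\<lambda>s. B j s * w s"] j i mag_mult_signed_repr[OF w j] by simp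
  moreover have "mag (B j i * w i) = mag (B j i * y i)"
    using mag_mult_signed_repr[OF w i(1)] .
  ultimately have "B j i * w i = 0 \<or> mag (B j i * w i) < mag (\<Sum>s\<in>{..<n} - {i}. B j s * w s)"
    using negligible by auto
  then have "(\<Sum>s\<in>{..<n} - {i}. B j s * w s) + B j i * w i = (\<Sum>s\<in>{..<n} - {i}. B j s * w s)"
    using add_absorb by auto
  then show ?thesis
    using i by (simp add: mat_vec_def sum.remove[of _ i] add.commute)
qed

lemma balance_row_by_entry:
  assumes y: "exact_rows y" and v: "signed_repr y v" and i: "i < n" "i \<noteq> k" and y_i: "\<not> signed (y i)"
  shows "\<exists>x. signed_repr y (v(i := x)) \<and> balanced (mat_vec n B (v(i := x)) i)"
proof -
  define q where "q = (\<Sum>s\<in>{..<n} - {i}. B i s * v s)"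
  have "mag q = mag (\<Sum>s\<in>{..<n} - {i}. B i s * y s)"
    unfolding q_def using mag_mult_signed_repr[OF v] by (intro mag_sum_cong) auto
  then have "mag q = mag (B i i * y i)"
    using y i by (simp add: exact_rows_def)
  then obtain x where x: "signed x" "mag x = mag (y i)" "balanced (B i i * x + q)"
    using exists_balancing_entry[of "B i i"] i signed_diag diag_nonzero by blast
  then have "signed_repr y (v(i := x))"
    using v y_i by (auto simp: signed_repr_def)
  moreover have "balanced (mat_vec n B (v(i := x)) i)"
    using x i by (simp add: mat_vec_split q_def)
  ultimately show ?thesis
    by blast
qed

lemma mat_vec_update_lower_potential:
  assumes y: "exact_rows y" and v: "signed_repr y v" "signed_repr y (v(i := x))"
    and i: "i < n" and j: "j < n" "j \<noteq> k" "j \<noteq> i" and le: "potential y i \<le> potential y j"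
  shows "mat_vec n B (v(i := x)) j = mat_vec n B v j"
proof -
  have negligible: "B j i * y i = 0 \<or> mag (B j i * y i) < mag (B j j * y j)"
    using j i le by (intro exact_rows_term_negligible[OF y]) auto
  have "mat_vec n B (v(i := x)) j = (\<Sum>s\<in>{..<n} - {i}. B j s * v s)"
    using mat_vec_negligible_column[OF v(2) j(1) i j(3) negligible] by simp
  also have "\<dots> = mat_vec n B v j"
    using mat_vec_negligible_column[OF v(1) j(1) i j(3) negligible] by simp
  finally show ?thesis .
qed

text \<open>The rows are balanced one at a time, in order of decreasing potential; fixing the entry of
  a new row leaves the rows treated before unchanged.\<close>

lemma signed_repr_balanced_on:
  assumes y: "exact_rows y" and T: "T \<subseteq> {..<n} - {k}"
  shows "\<exists>v. signed_repr y v \<and> (\<forall>j\<in>T. balanced (mat_vec n B v j))"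
  using finite_subset[OF T finite_Diff[OF finite_lessThan]] T
proof (induction T rule: finite_induct_decreasing[where f="potential y"])
  case empty
  then show ?case
    using signed_repr_exists by blast
next
  case (insert i T)
  then obtain v where v: "signed_repr y v" and rows: "\<forall>j\<in>T. balanced (mat_vec n B v j)"
    by auto
  have i: "i < n" "i \<noteq> k"
    using insert.prems by auto
  show ?case
  proof (cases "signed (y i)")
    case True
    then show ?thesis
      using balanced_signed_row_signed_repr[OF y v i] v rows by auto
  next
    case False
    then obtain x where v': "signed_repr y (v(i := x))"
      and row_i: "balanced (mat_vec n B (v(i := x)) i)"
      using balance_row_by_entry[OF y v i] by blast
    have "mat_vec n B (v(i := x)) j = mat_vec n B v j" if j: "j \<in> T" for j
      using insert j i by (intro mat_vec_update_lower_potential[OF y v v']) auto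
    then have "\<forall>j\<in>insert i T. balanced (mat_vec n B (v(i := x)) j)"
      using row_i rows by simp
    then show ?thesis
      using v' by blast
  qed
qed

theorem signed_repr_eigvec_exists:
  assumes y: "exact_rows y" and y_k: "signed (y k)"
    and dom: "\<And>s. s < n \<Longrightarrow> mag (B k s * y s) \<le> mag (B k k * y k)"
  shows "\<exists>v. signed_repr y v \<and> (\<forall>i<n. balanced (mat_vec n B v i))"
proof -
  obtain v where v: "signed_repr y v" and rows: "\<forall>j\<in>{..<n} - {k}. balanced (mat_vec n B v j)"
    using signed_repr_balanced_on[OF y order.refl] by blast
  moreover have "balanced (mat_vec n B v k)"
    using balanced_pivot_row_signed_repr[OF y_k dom v] by simp
  ultimately show ?thesis
    by (metis Diff_iff lessThan_iff singletonD)
qed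

theorem eigvec_exists_signed_repr_adj_col:
  "\<exists>v. signed_repr adj_col v \<and> v k \<noteq> 0 \<and> (\<forall>i<n. balanced (mat_vec n B v i))"
proof -
  obtain v where v: "signed_repr adj_col v" and rows: "\<forall>i<n. balanced (mat_vec n B v i)"
    using signed_repr_eigvec_exists[OF exact_rows_adj_col signed_adj_col_pivot mag_pivot_row_le]
    by blast
  moreover have "v k \<noteq> 0"
    using v k_less signed_adj_col_pivot adj_col_pivot_nonzero by (simp add: signed_repr_def)
  ultimately show ?thesis
    by blast
qed

end

section \<open>From TPD matrices to the locale\<close>

lemma sless_zero_imp_positive: "sless 0 a \<Longrightarrow> \<exists>x. a = SElt SPos x"
  by (cases a) (auto simp: sless_def spositive_def zero_smax_def)

lemma sless_square_imp_mag_less: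
  assumes "sless (a * a) b" "signed (a::'g::linordered_ab_group_add smax)"
  shows "mag (a * a) < mag b"
  using assms by (cases a rule: smax_cases; cases b rule: smax_cases)
    (auto simp: sless_def spositive_def signed_def zero_smax_def split: if_splits)

lemma shift_mat_offdiag_square:
  "i \<noteq> j \<Longrightarrow> shift_mat \<gamma> A i j * shift_mat \<gamma> A i j = A i j * A i j"
  by (simp add: shift_mat_def sminus_mult_left sminus_mult_right)

lemma mag_le_shift_mat_diag: "mag (A i i) \<le> mag (shift_mat \<gamma> A i i)"
  by (simp add: shift_mat_def)

lemma shifted_tpd_shift_mat:
  assumes tpd: "TPD n A" and k: "k < n" and simple: "card {i. i < n \<and> A i i = A k k} = 1"
  shows "shifted_tpd n k (shift_mat (A k k) A)"
proof
  let ?B = "shift_mat (A k k) A"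
  have distinct: "A r r \<noteq> A k k" if "r < n" "r \<noteq> k" for r
  proof
    assume "A r r = A k k"
    then have "{k, r} \<subseteq> {i. i < n \<and> A i i = A k k}"
      using that k by auto
    then show False
      using card_mono[of "{i. i < n \<and> A i i = A k k}" "{k, r}"] simple that by simp
  qed
  have A_diag: "sless 0 (A i i)" and A_signed: "signed (A i j)"
    and A_dom: "i \<noteq> j \<Longrightarrow> sless (A i j * A i j) (A i i * A j j)" if "i < n" "j < n" for i j
    using tpd that by (simp_all add: TPD_def)
  obtain g where g: "A k k = SElt SPos g"
    using sless_zero_imp_positive A_diag[OF k k] by blast
  show "k < n"
    by (rule k)
  show "balanced (?B k k)"
    by (simp add: shift_mat_def balanced_add_sminus_self)
  fix r assume r: "r < n"
  obtain d where d: "A r r = SElt SPos d"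
    using sless_zero_imp_positive A_diag[OF r r] by blast
  show "?B r r \<noteq> 0"
    by (simp add: shift_mat_def d)
  show "signed (?B r r)" if "r \<noteq> k"
    using distinct[OF r that] by (auto simp: shift_mat_def signed_def d g zero_smax_def)
  fix c assume c: "c < n" "r \<noteq> c"
  have "mag (A r c * A r c) < mag (A r r * A c c)"
    using A_dom[OF r c(1,2)] A_signed[OF r c(1)] by (rule sless_square_imp_mag_less)
  also have "\<dots> \<le> mag (?B r r * ?B c c)"
    by (intro mag_mult_mono mag_le_shift_mat_diag)
  finally show "mag (?B r c * ?B r c) < mag (?B r r * ?B c c)"
    by (simp add: shift_mat_offdiag_square[OF c(2)])
qed

lemma nabla_mat_vec_iff_balanced_shift:
  assumes "i < n"
  shows "nabla (mat_vec n A v i) (\<gamma> * v i) \<longleftrightarrow> balanced (mat_vec n (shift_mat \<gamma> A) v i)"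
proof -
  have "mat_vec n (shift_mat \<gamma> A) v i = (\<Sum>s<n. (if i = s then \<gamma> * v s else 0) + \<ominus> (A i s * v s))"
    unfolding mat_vec_def shift_mat_def by (intro sum.cong) (auto simp: distrib_right sminus_mult_left)
  also have "\<dots> = \<gamma> * v i + \<ominus> (mat_vec n A v i)"
    using assms by (simp add: sum.distrib sminus_sum mat_vec_def)
  finally have "mat_vec n (shift_mat \<gamma> A) v i = \<ominus> (mat_vec n A v i + \<ominus> (\<gamma> * v i))"
    by (simp add: sminus_add add.commute)
  then show ?thesis
    by (simp add: nabla_def)
qed

lemma eigvec_iff_balanced_shift:
  "eigvec n A \<gamma> v \<longleftrightarrow>
   (\<forall>i<n. signed (v i)) \<and> (\<exists>i<n. v i \<noteq> 0) \<and> (\<forall>i<n. balanced (mat_vec n (shift_mat \<gamma> A) v i))"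
  by (auto simp: eigvec_def nabla_mat_vec_iff_balanced_shift)

lemma weak_eigvec_iff_balanced_shift:
  "weak_eigvec n A \<gamma> v \<longleftrightarrow>
   (\<exists>i<n. signed (v i) \<and> v i \<noteq> 0) \<and> (\<forall>i<n. balanced (mat_vec n (shift_mat \<gamma> A) v i))"
  by (auto simp: weak_eigvec_def nabla_mat_vec_iff_balanced_shift)

theorem corollary5p2:
  fixes A :: "nat \<Rightarrow> nat \<Rightarrow> 'g::linordered_ab_group_add smax" and n k :: nat
  assumes div: "divisible_group TYPE('g)"
    and tpd: "TPD n A"
    and sorted: "\<forall>i<n. \<forall>j<n. i \<le> j \<longrightarrow> spreceq (A j j) (A i i)"
    and kn: "k < n"
    and simple: "card {i. i < n \<and> A i i = A k k} = 1"
  defines "vk \<equiv> (\<lambda>i. sadj n (shift_mat (A k k) A) i k)"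
  shows "(weak_eigvec n A (A k k) vk \<and> signed (vk k) \<and> vk k \<noteq> 0)
    \<and> (\<exists>v. eigvec n A (A k k) v \<and> (\<forall>i<n. smod (v i) = smod (vk i)) \<and>
              (\<forall>i<n. signed (vk i) \<longrightarrow> v i = vk i))
    \<and> (\<forall>v. eigvec n A (A k k) v \<longrightarrow>
           (\<exists>c. signed c \<and> c \<noteq> 0 \<and> (\<forall>i<n. nabla (v i) (c * vk i))))"
proof -
  interpret shifted_tpd n k "shift_mat (A k k) A"
    using tpd kn simple by (rule shifted_tpd_shift_mat)
  have vk: "vk = adj_col"
    by (simp add: vk_def adj_col_def fun_eq_iff)
  have weak_eig: "weak_eigvec n A (A k k) adj_col \<and> signed (adj_col k) \<and> adj_col k \<noteq> 0"
    using k_less signed_adj_col_pivot adj_col_pivot_nonzero balanced_row_adj_col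
    by (auto simp: weak_eigvec_iff_balanced_shift)
  obtain v where v: "signed_repr adj_col v" "v k \<noteq> 0"
    "\<forall>i<n. balanced (mat_vec n (shift_mat (A k k) A) v i)"
    using eigvec_exists_signed_repr_adj_col by blast
  then have eig_exists: "eigvec n A (A k k) v \<and> (\<forall>i<n. smod (v i) = smod (adj_col i)) \<and>
      (\<forall>i<n. signed (adj_col i) \<longrightarrow> v i = adj_col i)"
    using k_less by (auto simp: eigvec_iff_balanced_shift signed_repr_def smod_eq_iff_mag_eq)
  have eig_unique: "\<exists>c. signed c \<and> c \<noteq> 0 \<and> (\<forall>i<n. nabla (w i) (c * adj_col i))"
    if "eigvec n A (A k k) w" for w
    using that eigvec_unique_up_to_scaling by (simp add: eigvec_iff_balanced_shift)
  show ?thesis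
    unfolding vk using weak_eig eig_exists eig_unique by blast
qed

end
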